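(* Let $E$ be a regular hermitian $(a,b)$-module of rank $n$. Suppose there exists $\lambda\in\mathbb{C}$ such that $E$ contains two distinct normal sub-$(a,b)$-modules $F\simeq E_f$ and $G\simeq E_g$ of rank one with $f\equiv g\equiv\lambda \pmod{\mathbb{Z}}$. Then there exist normal sub-$(a,b)$-modules $F_1\subset F_{n-1}$ of $E$, of ranks $1$ and $n-1$ respectively, such that the adjoint of $E/F_{n-1}$ is isomorphic to $F_1$ and $F_{n-1}/F_1$ is hermitian.
   Context: An $(a,b)$-module is a free module $E$ of finite rank over $\mathbb{C}[[b]]$ with a $\mathbb{C}$-linear endomorphism $a$ satisfying $ab-ba=b^2$. A sub-$(a,b)$-module is a sub-$\mathbb{C}[[b]]$-module stable by $a$; it is normal if the quotient is free over $\mathbb{C}[[b]]$. $E$ is regular if it embeds into an $(a,b)$-module $E'$ with $aE'\subset bE'$. $E_\lambda$ is the rank-one (elementary) $(a,b)$-module generated by $e_\lambda$ with $ae_\lambda=\lambda be_\lambda$; $\lambda$ is its parameter. The dual $M^*$ of an $(a,b)$-module $M$ is $\mathrm{Hom}_{\mathbb{C}[[b]]}(M,E_0)$ with $(a\cdot\phi)(x)=a\phi(x)-\phi(ax)$; the conjugate $\breve M$ is the set $M$ with $a,b$ replaced by $-a,-b$; the adjoint $\check{M}^*$ is the conjugate of $M^*$. An $(a,b)$-hermitian form on $M$ is a $\mathbb{C}[[b]]$-bilinear $H:M\times\breve M\to E_0$ with $aH(v,w)=H(av,w)+H(v,a_{\breve M}w)$ (where $a_{\breve M}=-a$) and such that $H(v,w)=S(b)e_0$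 implies $H(w,v)=S(-b)e_0$; it is non-degenerate if $y\mapsto H(\cdot,y)$ is an isomorphism $M\to\check{M}^*$. $M$ is hermitian if it admits a non-degenerate hermitian form. *)

theory Defs
  imports "HOL-Computational_Algebra.Formal_Power_Series"
begin

section \<open>(a,b)-modules over C[[b]] (b = fps_X), with explicit carriers\<close>

record 'v abmod =
  ab_carr :: "'v set"
  ab_zero :: 'v
  ab_add  :: "'v \<Rightarrow> 'v \<Rightarrow> 'v"
  ab_smul :: "complex fps \<Rightarrow> 'v \<Rightarrow> 'v"
  ab_a    :: "'v \<Rightarrow> 'v"

definition fps_reflect :: "complex fps \<Rightarrow> complex fps" where
  "fps_reflect S = Abs_fps (\<lambda>n. (-1) ^ n * fps_nth S n)"

text \<open>C[[b]]-module axioms on the carrier, plus a C-linear endomorphism a with ab - ba = b^2\<close>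
definition ab_premodule :: "'v abmod \<Rightarrow> bool" where
  "ab_premodule M \<longleftrightarrow>
     ab_zero M \<in> ab_carr M \<and>
     (\<forall>x\<in>ab_carr M. \<forall>y\<in>ab_carr M. ab_add M x y \<in> ab_carr M) \<and>
     (\<forall>s. \<forall>x\<in>ab_carr M. ab_smul M s x \<in> ab_carr M) \<and>
     (\<forall>x\<in>ab_carr M. ab_a M x \<in> ab_carr M) \<and>
     (\<forall>x\<in>ab_carr M. \<forall>y\<in>ab_carr M. \<forall>z\<in>ab_carr M.
        ab_add M (ab_add M x y) z = ab_add M x (ab_add M y z)) \<and>
     (\<forall>x\<in>ab_carr M. \<forall>y\<in>ab_carr M. ab_add M x y = ab_add M y x) \<and>
     (\<forall>x\<in>ab_carr M. ab_add M (ab_zero M) x = x) \<and>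
     (\<forall>x\<in>ab_carr M. \<exists>y\<in>ab_carr M. ab_add M x y = ab_zero M) \<and>
     (\<forall>s. \<forall>x\<in>ab_carr M. \<forall>y\<in>ab_carr M.
        ab_smul M s (ab_add M x y) = ab_add M (ab_smul M s x) (ab_smul M s y)) \<and>
     (\<forall>s t. \<forall>x\<in>ab_carr M. ab_smul M (s + t) x = ab_add M (ab_smul M s x) (ab_smul M t x)) \<and>
     (\<forall>s t. \<forall>x\<in>ab_carr M. ab_smul M (s * t) x = ab_smul M s (ab_smul M t x)) \<and>
     (\<forall>x\<in>ab_carr M. ab_smul M 1 x = x) \<and>
     (\<forall>x\<in>ab_carr M. \<forall>y\<in>ab_carr M. ab_a M (ab_add M x y) = ab_add M (ab_a M x) (ab_a M y)) \<and>
     (\<forall>c. \<forall>x\<in>ab_carr M. ab_a M (ab_smul M (fps_const c) x) = ab_smul M (fps_const c) (ab_a M x)) \<and>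
     (\<forall>x\<in>ab_carr M. ab_a M (ab_smul M fps_X x) =
        ab_add M (ab_smul M fps_X (ab_a M x)) (ab_smul M (fps_X ^ 2) x))"

definition lincomb :: "'v abmod \<Rightarrow> complex fps list \<Rightarrow> 'v list \<Rightarrow> 'v" where
  "lincomb M cs vs = foldr (\<lambda>(c, v) acc. ab_add M (ab_smul M c v) acc) (zip cs vs) (ab_zero M)"

definition is_basis :: "'v abmod \<Rightarrow> 'v list \<Rightarrow> bool" where
  "is_basis M vs \<longleftrightarrow> set vs \<subseteq> ab_carr M \<and>
     (\<forall>x\<in>ab_carr M. \<exists>!cs. length cs = length vs \<and> lincomb M cs vs = x)"

definition has_rank :: "'v abmod \<Rightarrow> nat \<Rightarrow> bool" where
  "has_rank M n \<longleftrightarrow> (\<exists>vs. is_basis M vs \<and> length vs = n)"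

definition is_abmod :: "'v abmod \<Rightarrow> bool" where
  "is_abmod M \<longleftrightarrow> ab_premodule M \<and> (\<exists>n. has_rank M n)"

definition ab_hom :: "'v abmod \<Rightarrow> 'w abmod \<Rightarrow> ('v \<Rightarrow> 'w) \<Rightarrow> bool" where
  "ab_hom M N h \<longleftrightarrow>
     (\<forall>x\<in>ab_carr M. h x \<in> ab_carr N) \<and>
     (\<forall>x\<in>ab_carr M. \<forall>y\<in>ab_carr M. h (ab_add M x y) = ab_add N (h x) (h y)) \<and>
     (\<forall>s. \<forall>x\<in>ab_carr M. h (ab_smul M s x) = ab_smul N s (h x)) \<and>
     (\<forall>x\<in>ab_carr M. h (ab_a M x) = ab_a N (h x))"

definition ab_iso_map :: "'v abmod \<Rightarrow> 'w abmod \<Rightarrow> ('v \<Rightarrow> 'w) \<Rightarrow> bool" where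
  "ab_iso_map M N h \<longleftrightarrow> ab_hom M N h \<and> bij_betw h (ab_carr M) (ab_carr N)"

definition ab_isomorphic :: "'v abmod \<Rightarrow> 'w abmod \<Rightarrow> bool" where
  "ab_isomorphic M N \<longleftrightarrow> (\<exists>h. ab_iso_map M N h)"

text \<open>elementary module E_lambda = C[[b]] e_lambda, a e_lambda = lambda b e_lambda,
  so a (S e_lambda) = (lambda b S + b^2 S') e_lambda\<close>
definition E_elem :: "complex \<Rightarrow> complex fps abmod" where
  "E_elem c = \<lparr> ab_carr = UNIV, ab_zero = 0, ab_add = (+), ab_smul = (*),
     ab_a = (\<lambda>S. fps_const c * fps_X * S + fps_X ^ 2 * fps_deriv S) \<rparr>"

definition is_sub :: "'v abmod \<Rightarrow> 'v set \<Rightarrow> bool" where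
  "is_sub M F \<longleftrightarrow> F \<subseteq> ab_carr M \<and> ab_zero M \<in> F \<and>
     (\<forall>x\<in>F. \<forall>y\<in>F. ab_add M x y \<in> F) \<and>
     (\<forall>s. \<forall>x\<in>F. ab_smul M s x \<in> F) \<and>
     (\<forall>x\<in>F. ab_a M x \<in> F)"

definition restr :: "'v abmod \<Rightarrow> 'v set \<Rightarrow> 'v abmod" where
  "restr M F = M\<lparr>ab_carr := F\<rparr>"

definition coset :: "'v abmod \<Rightarrow> 'v set \<Rightarrow> 'v \<Rightarrow> 'v set" where
  "coset M F x = {ab_add M x z | z. z \<in> F}"

definition quot :: "'v abmod \<Rightarrow> 'v set \<Rightarrow> 'v set abmod" where
  "quot M F = \<lparr> ab_carr = coset M F ` ab_carr M,
     ab_zero = coset M F (ab_zero M),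
     ab_add = (\<lambda>X Y. coset M F (ab_add M (SOME x. x \<in> X) (SOME y. y \<in> Y))),
     ab_smul = (\<lambda>s X. coset M F (ab_smul M s (SOME x. x \<in> X))),
     ab_a = (\<lambda>X. coset M F (ab_a M (SOME x. x \<in> X))) \<rparr>"

definition normal_sub :: "'v abmod \<Rightarrow> 'v set \<Rightarrow> bool" where
  "normal_sub M F \<longleftrightarrow> is_sub M F \<and> (\<exists>n. has_rank (quot M F) n)"

text \<open>dual M* = Hom_{C[[b]]}(M, E_0), (a.phi)(x) = a phi(x) - phi(a x);
  functions are taken to be 0 outside the carrier\<close>
definition dual :: "'v abmod \<Rightarrow> ('v \<Rightarrow> complex fps) abmod" where
  "dual M = \<lparr> ab_carr = {\<phi>. (\<forall>x\<in>ab_carr M. \<forall>y\<in>ab_carr M. \<phi> (ab_add M x y) = \<phi> x + \<phi> y) \<and>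
                          (\<forall>s. \<forall>x\<in>ab_carr M. \<phi> (ab_smul M s x) = s * \<phi> x) \<and>
                          (\<forall>x. x \<notin> ab_carr M \<longrightarrow> \<phi> x = 0)},
     ab_zero = (\<lambda>x. 0),
     ab_add = (\<lambda>\<phi> \<psi> x. \<phi> x + \<psi> x),
     ab_smul = (\<lambda>s \<phi> x. s * \<phi> x),
     ab_a = (\<lambda>\<phi> x. if x \<in> ab_carr M then ab_a (E_elem 0) (\<phi> x) - \<phi> (ab_a M x) else 0) \<rparr>"

text \<open>conjugate: a, b replaced by -a, -b (so S(b) acts as S(-b))\<close>
definition conj :: "'v abmod \<Rightarrow> 'v abmod" where
  "conj M = M\<lparr> ab_smul := (\<lambda>s x. ab_smul M (fps_reflect s) x),
               ab_a := (\<lambda>x. ab_smul M (-1) (ab_a M x)) \<rparr>"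

definition adjoint :: "'v abmod \<Rightarrow> ('v \<Rightarrow> complex fps) abmod" where
  "adjoint M = conj (dual M)"

text \<open>(a,b)-hermitian forms H : M x conj(M) -> E_0\<close>
definition herm_form :: "'v abmod \<Rightarrow> ('v \<Rightarrow> 'v \<Rightarrow> complex fps) \<Rightarrow> bool" where
  "herm_form M H \<longleftrightarrow>
     (\<forall>v\<in>ab_carr M. \<forall>v'\<in>ab_carr M. \<forall>w\<in>ab_carr M. H (ab_add M v v') w = H v w + H v' w) \<and>
     (\<forall>v\<in>ab_carr M. \<forall>w\<in>ab_carr M. \<forall>w'\<in>ab_carr M. H v (ab_add (conj M) w w') = H v w + H v w') \<and>
     (\<forall>s. \<forall>v\<in>ab_carr M. \<forall>w\<in>ab_carr M. H (ab_smul M s v) w = s * H v w) \<and>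
     (\<forall>s. \<forall>v\<in>ab_carr M. \<forall>w\<in>ab_carr M. H v (ab_smul (conj M) s w) = s * H v w) \<and>
     (\<forall>v\<in>ab_carr M. \<forall>w\<in>ab_carr M.
        ab_a (E_elem 0) (H v w) = H (ab_a M v) w + H v (ab_a (conj M) w)) \<and>
     (\<forall>v\<in>ab_carr M. \<forall>w\<in>ab_carr M. H w v = fps_reflect (H v w))"

definition herm_nondeg :: "'v abmod \<Rightarrow> ('v \<Rightarrow> 'v \<Rightarrow> complex fps) \<Rightarrow> bool" where
  "herm_nondeg M H \<longleftrightarrow>
     ab_iso_map M (adjoint M) (\<lambda>y x. if x \<in> ab_carr M then H x y else 0)"

definition hermitian :: "'v abmod \<Rightarrow> bool" where
  "hermitian M \<longleftrightarrow> (\<exists>H. herm_form M H \<and> herm_nondeg M H)"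

text \<open>Any free finite-rank
  C[[b]]-module is isomorphic to one with carrier inside nat \<Rightarrow> complex fps, so E'
  is taken with that carrier type.\<close>
definition regular :: "'v abmod \<Rightarrow> bool" where
  "regular M \<longleftrightarrow> (\<exists>E' :: (nat \<Rightarrow> complex fps) abmod. is_abmod E' \<and>
      (\<forall>x\<in>ab_carr E'. \<exists>y\<in>ab_carr E'. ab_a E' x = ab_smul E' fps_X y) \<and>
      (\<exists>h. ab_hom M E' h \<and> inj_on h (ab_carr M)))"

end

theory Submission
  imports Defs
begin

text \<open>Let \<open>F = C[[b]] x\<close> with \<open>a x = f b x\<close>. Then \<open>H(x,x)\<close> solves \<open>b\<^sup>2 S' = 2f b S\<close> and is
  invariant under \<open>b \<mapsto> -b\<close>, so either \<open>x\<close> is isotropic or \<open>H(x,x) = \<alpha> b\<^sup>2\<^sup>p\<close> with \<open>f = p \<in> \<nat>\<close>.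
  If both generators \<open>x, y\<close> are anisotropic, with parameters \<open>p \<le> p + k\<close>, then \<open>b\<^sup>k x + t y\<close> is
  an eigenvector of \<open>a\<close>, isotropic for a root \<open>t\<close> of a quadratic equation, and nonzero because
  \<open>F \<noteq> G\<close> and \<open>G\<close> is normal. Dividing \<open>H(\<cdot>, z)\<close> by its \<open>b\<close>-adic content turns an isotropic
  eigenvector \<open>z\<close> into one, \<open>w\<close>, with \<open>H(w, y\<^sub>0) = 1\<close> for some \<open>y\<^sub>0\<close>. Then \<open>F\<^sub>1 = C[[b]] w\<close> and
  \<open>F\<^sub>n\<^sub>-\<^sub>1 = w\<^sup>\<bottom>\<close> do the job: \<open>y\<^sub>0\<close> spans a complement of \<open>F\<^sub>n\<^sub>-\<^sub>1\<close>, so \<open>H\<close> identifies \<open>F\<^sub>1\<close> with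
  the adjoint of \<open>E/F\<^sub>n\<^sub>-\<^sub>1\<close>, and \<open>H\<close> descends to a nondegenerate form on \<open>F\<^sub>n\<^sub>-\<^sub>1/F\<^sub>1\<close>.\<close>

section \<open>The reflection \<open>S(b) \<mapsto> S(-b)\<close> and the Euler equation\<close>

lemma fps_reflect_nth [simp]: "fps_nth (fps_reflect S) n = (-1)^n * fps_nth S n"
  by (simp add: fps_reflect_def)

lemma fps_reflect_add [simp]: "fps_reflect (S + T) = fps_reflect S + fps_reflect T"
  by (rule fps_ext) (simp add: algebra_simps)

lemma fps_reflect_diff [simp]: "fps_reflect (S - T) = fps_reflect S - fps_reflect T"
  by (rule fps_ext) (simp add: algebra_simps)

lemma fps_reflect_uminus [simp]: "fps_reflect (- S) = - fps_reflect S"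
  by (rule fps_ext) (simp add: algebra_simps)

lemma fps_reflect_reflect [simp]: "fps_reflect (fps_reflect S) = S"
  by (rule fps_ext) (simp flip: power_mult_distrib)

lemma fps_reflect_const [simp]: "fps_reflect (fps_const c) = fps_const c"
  by (rule fps_ext) simp

lemma fps_reflect_0 [simp]: "fps_reflect 0 = 0"
  by (rule fps_ext) simp

lemma fps_reflect_1 [simp]: "fps_reflect 1 = 1"
  by (rule fps_ext) simp

lemma fps_reflect_of_nat [simp]: "fps_reflect (of_nat m) = of_nat m"
  by (metis fps_of_nat fps_reflect_const)

lemma fps_reflect_X [simp]: "fps_reflect fps_X = - fps_X"
  by (rule fps_ext) (simp add: fps_X_def)

lemma fps_reflect_mult [simp]: "fps_reflect (S * T) = fps_reflect S * fps_reflect T"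
proof (rule fps_ext)
  fix n
  have "fps_nth (fps_reflect (S * T)) n = (\<Sum>i=0..n. (-1)^n * (fps_nth S i * fps_nth T (n-i)))"
    by (simp add: fps_mult_nth sum_distrib_left)
  also have "\<dots> = (\<Sum>i=0..n. ((-1)^i * fps_nth S i) * ((-1)^(n-i) * fps_nth T (n-i)))"
  proof (rule sum.cong)
    fix i assume "i \<in> {0..n}"
    hence "(-1::complex)^n = (-1)^i * (-1)^(n-i)" by (simp flip: power_add)
    thus "(-1)^n * (fps_nth S i * fps_nth T (n-i)) = ((-1)^i * fps_nth S i) * ((-1)^(n-i) * fps_nth T (n-i))"
      by simp
  qed simp
  also have "\<dots> = fps_nth (fps_reflect S * fps_reflect T) n" by (simp add: fps_mult_nth)
  finally show "fps_nth (fps_reflect (S * T)) n = fps_nth (fps_reflect S * fps_reflect T) n" .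
qed

lemma fps_reflect_power [simp]: "fps_reflect (S ^ k) = fps_reflect S ^ k"
  by (induct k) simp_all

lemma fps_reflect_deriv: "fps_reflect (fps_deriv S) = - fps_deriv (fps_reflect S)"
  by (rule fps_ext) (simp add: algebra_simps)

lemma fps_reflect_eq_0_iff [simp]: "fps_reflect S = 0 \<longleftrightarrow> S = 0"
  by (metis fps_reflect_0 fps_reflect_reflect)

lemma fps_reflect_eq_iff: "fps_reflect S = fps_reflect T \<longleftrightarrow> S = T"
  by (metis fps_reflect_reflect)

lemma subdegree_fps_reflect [simp]: "subdegree (fps_reflect S) = subdegree (S :: complex fps)"
proof (cases "S = 0")
  case False
  show ?thesis
  proof (rule subdegreeI)
    show "fps_nth (fps_reflect S) (subdegree S) \<noteq> 0" using False by simp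
    show "\<And>i. i < subdegree S \<Longrightarrow> fps_nth (fps_reflect S) i = 0" by auto
  qed
qed simp

lemma fps_neg_X_power: "(- fps_X :: complex fps)^n = fps_const ((-1)^n) * fps_X^n"
  by (induct n) (simp_all add: algebra_simps flip: fps_const_neg)

lemma fps_neg_X_power_nonzero: "(- fps_X :: complex fps)^m \<noteq> 0"
  by (simp add: fps_neg_X_power)

lemma subdegree_fps_neg_X_power: "subdegree ((- fps_X :: complex fps)^m) = m"
  by (simp add: fps_neg_X_power fps_X_power_subdegree)

lemma X2_deriv_X_power: "fps_X^2 * fps_deriv (fps_X ^ m :: complex fps) = of_nat m * fps_X * fps_X^m"
proof (induct m)
  case (Suc m)
  have "fps_X^2 * fps_deriv (fps_X ^ Suc m :: complex fps) = fps_X^2 * (fps_X^m + fps_X * fps_deriv (fps_X^m))"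
    by (simp add: fps_deriv_mult)
  also have "\<dots> = fps_X * fps_X^Suc m + fps_X * (fps_X^2 * fps_deriv (fps_X^m))"
    by (simp add: algebra_simps power2_eq_square)
  also have "\<dots> = of_nat (Suc m) * fps_X * fps_X^Suc m" using Suc by (simp add: algebra_simps)
  finally show ?case .
qed simp

lemma X2_deriv_mult:
  "fps_X^2 * fps_deriv (B * Q) = B * (fps_X^2 * fps_deriv Q) + fps_X^2 * fps_deriv B * (Q :: complex fps)"
  by (simp add: fps_deriv_mult algebra_simps)

lemma X2_deriv_eq_coeff:
  fixes S :: "complex fps"
  assumes "fps_X^2 * fps_deriv S = fps_const c * fps_X * S"
  shows "(of_nat i - c) * fps_nth S i = 0"
proof -
  have "fps_nth (fps_X^2 * fps_deriv S) (Suc i) = fps_nth (fps_const c * fps_X * S) (Suc i)"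
    using assms by simp
  moreover have "fps_nth (fps_X^2 * fps_deriv S) (Suc i) = of_nat i * fps_nth S i"
    by (cases i) (simp_all add: fps_X_power_mult_nth)
  moreover have "fps_nth (fps_const c * fps_X * S) (Suc i) = c * fps_nth S i"
    by (simp add: mult.assoc)
  ultimately show ?thesis by (simp add: left_diff_distrib)
qed

lemma X2_deriv_eq_of_nat:
  fixes S :: "complex fps"
  assumes "fps_X^2 * fps_deriv S = fps_const (of_nat k) * fps_X * S"
  shows "S = fps_const (fps_nth S k) * fps_X^k"
proof (rule fps_ext)
  fix i
  have "(of_nat i - of_nat k) * fps_nth S i = 0" using X2_deriv_eq_coeff[OF assms] by simp
  thus "fps_nth S i = fps_nth (fps_const (fps_nth S k) * fps_X^k) i"
    by (cases "i = k") auto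
qed

lemma X2_deriv_eq_nonzero:
  fixes S :: "complex fps"
  assumes "fps_X^2 * fps_deriv S = fps_const c * fps_X * S" "S \<noteq> 0"
  shows "\<exists>k. c = of_nat k \<and> S = fps_const (fps_nth S k) * fps_X^k \<and> fps_nth S k \<noteq> 0"
proof -
  obtain i where i: "fps_nth S i \<noteq> 0" using assms(2) by (metis fps_nonzero_nth)
  hence c: "c = of_nat i" using X2_deriv_eq_coeff[OF assms(1), of i] by simp
  show ?thesis using X2_deriv_eq_of_nat[of S i] assms(1) c i by auto
qed

lemma quadratic_root_exists:
  fixes \<alpha> \<beta> \<gamma> :: complex
  assumes "\<beta> \<noteq> 0"
  shows "\<exists>t. \<beta> * t * t + 2 * \<gamma> * t + \<alpha> = 0"
proof -
  define s where "s = csqrt (4 * \<gamma> * \<gamma> - 4 * \<beta> * \<alpha>)"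
  have s2: "s * s = 4 * \<gamma> * \<gamma> - 4 * \<beta> * \<alpha>" unfolding s_def by (metis power2_csqrt power2_eq_square)
  define t where "t = (- 2 * \<gamma> + s) / (2 * \<beta>)"
  have "\<beta> * t * t + 2 * \<gamma> * t + \<alpha> = ((s * s) - 4 * \<gamma> * \<gamma> + 4 * \<beta> * \<alpha>) / (4 * \<beta>)"
    unfolding t_def using assms by (simp add: field_simps)
  also have "\<dots> = 0" using s2 by simp
  finally show ?thesis by blast
qed

section \<open>Premodules, bases and quotients\<close>

lemma lincomb_Nil [simp]: "lincomb M [] vs = ab_zero M" "lincomb M cs [] = ab_zero M"
  by (simp_all add: lincomb_def)

lemma lincomb_Cons [simp]: "lincomb M (c # cs) (v # vs) = ab_add M (ab_smul M c v) (lincomb M cs vs)"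
  by (simp add: lincomb_def)

lemma restr_simps [simp]:
  "ab_carr (restr M K) = K" "ab_add (restr M K) = ab_add M" "ab_smul (restr M K) = ab_smul M"
  "ab_zero (restr M K) = ab_zero M" "ab_a (restr M K) = ab_a M"
  by (simp_all add: restr_def)

lemma lincomb_restr [simp]: "lincomb (restr M K) = lincomb M"
  by (simp add: lincomb_def fun_eq_iff)

lemma conj_simps [simp]:
  "ab_carr (conj M) = ab_carr M" "ab_add (conj M) = ab_add M"
  "ab_smul (conj M) = (\<lambda>s x. ab_smul M (fps_reflect s) x)" "ab_zero (conj M) = ab_zero M"
  "ab_a (conj M) = (\<lambda>x. ab_smul M (-1) (ab_a M x))"
  by (simp_all add: conj_def)

lemma E_elem_simps [simp]:
  "ab_carr (E_elem f) = UNIV" "ab_smul (E_elem f) = (*)"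
  "ab_a (E_elem f) S = fps_const f * fps_X * S + fps_X^2 * fps_deriv S"
  by (simp_all add: E_elem_def)

lemma E_elem_0_a [simp]: "ab_a (E_elem 0) S = fps_X^2 * fps_deriv S"
  by (simp add: E_elem_def)

lemma dual_carr: "\<phi> \<in> ab_carr (dual M) \<longleftrightarrow>
   (\<forall>x\<in>ab_carr M. \<forall>y\<in>ab_carr M. \<phi> (ab_add M x y) = \<phi> x + \<phi> y) \<and>
   (\<forall>s. \<forall>x\<in>ab_carr M. \<phi> (ab_smul M s x) = s * \<phi> x) \<and>
   (\<forall>x. x \<notin> ab_carr M \<longrightarrow> \<phi> x = 0)"
  by (simp add: dual_def)

lemma adjoint_simps [simp]:
  "ab_carr (adjoint M) = ab_carr (dual M)"
  "ab_add (adjoint M) = (\<lambda>\<phi> \<psi> x. \<phi> x + \<psi> x)"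
  "ab_smul (adjoint M) = (\<lambda>s \<phi> x. fps_reflect s * \<phi> x)"
  "ab_a (adjoint M) = (\<lambda>\<phi> x. - (if x \<in> ab_carr M then fps_X^2 * fps_deriv (\<phi> x) - \<phi> (ab_a M x) else 0))"
  by (simp_all add: adjoint_def dual_def E_elem_def fun_eq_iff)

definition form_map :: "'v abmod \<Rightarrow> ('v \<Rightarrow> 'v \<Rightarrow> complex fps) \<Rightarrow> 'v \<Rightarrow> 'v \<Rightarrow> complex fps" where
  "form_map M H y = (\<lambda>x. if x \<in> ab_carr M then H x y else 0)"

lemma herm_nondeg_iff_form_map: "herm_nondeg M H \<longleftrightarrow> ab_iso_map M (adjoint M) (form_map M H)"
  by (simp add: herm_nondeg_def form_map_def[abs_def])

lemma ab_iso_map_inv: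
  assumes iso: "ab_iso_map M N h"
    and cadd: "\<forall>x\<in>ab_carr M. \<forall>y\<in>ab_carr M. ab_add M x y \<in> ab_carr M"
    and csm: "\<forall>s. \<forall>x\<in>ab_carr M. ab_smul M s x \<in> ab_carr M"
    and ca: "\<forall>x\<in>ab_carr M. ab_a M x \<in> ab_carr M"
  shows "ab_iso_map N M (inv_into (ab_carr M) h)"
proof -
  let ?g = "inv_into (ab_carr M) h"
  have bij: "bij_betw h (ab_carr M) (ab_carr N)" and hom: "ab_hom M N h"
    using iso unfolding ab_iso_map_def by auto
  have inj: "inj_on h (ab_carr M)" and img: "h ` ab_carr M = ab_carr N" using bij by (auto simp: bij_betw_def)
  have gh: "\<And>x. x \<in> ab_carr M \<Longrightarrow> ?g (h x) = x" using inj by (rule inv_into_f_f)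
  have bij': "bij_betw ?g (ab_carr N) (ab_carr M)" using bij by (rule bij_betw_inv_into)
  have "ab_hom N M ?g" unfolding ab_hom_def
  proof (intro conjI ballI allI)
    fix X assume "X \<in> ab_carr N"
    thus "?g X \<in> ab_carr M" using bij' by (meson bij_betwE)
  next
    fix X Y assume "X \<in> ab_carr N" "Y \<in> ab_carr N"
    then obtain x y where xy: "x \<in> ab_carr M" "y \<in> ab_carr M" "X = h x" "Y = h y" using img by blast
    have "ab_add N X Y = h (ab_add M x y)" using hom xy unfolding ab_hom_def by simp
    thus "?g (ab_add N X Y) = ab_add M (?g X) (?g Y)" using gh xy cadd by simp
  next
    fix s X assume "X \<in> ab_carr N"
    then obtain x where x: "x \<in> ab_carr M" "X = h x" using img by blast
    have "ab_smul N s X = h (ab_smul M s x)" using hom x unfolding ab_hom_def by simp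
    thus "?g (ab_smul N s X) = ab_smul M s (?g X)" using gh x csm by simp
  next
    fix X assume "X \<in> ab_carr N"
    then obtain x where x: "x \<in> ab_carr M" "X = h x" using img by blast
    have "ab_a N X = h (ab_a M x)" using hom x unfolding ab_hom_def by simp
    thus "?g (ab_a N X) = ab_a M (?g X)" using gh x ca by simp
  qed
  thus ?thesis using bij' unfolding ab_iso_map_def by simp
qed

lemma ab_hom_adjointI:
  assumes dual: "\<And>y. y \<in> ab_carr N \<Longrightarrow> h y \<in> ab_carr (dual M)"
    and outside: "\<And>y x. x \<notin> ab_carr M \<Longrightarrow> h y x = 0"
    and add: "\<And>y y' x. y \<in> ab_carr N \<Longrightarrow> y' \<in> ab_carr N \<Longrightarrow> x \<in> ab_carr M \<Longrightarrow>
      h (ab_add N y y') x = h y x + h y' x"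
    and smul: "\<And>s y x. y \<in> ab_carr N \<Longrightarrow> x \<in> ab_carr M \<Longrightarrow>
      h (ab_smul N s y) x = fps_reflect s * h y x"
    and a: "\<And>y x. y \<in> ab_carr N \<Longrightarrow> x \<in> ab_carr M \<Longrightarrow>
      h (ab_a N y) x = h y (ab_a M x) - fps_X^2 * fps_deriv (h y x)"
  shows "ab_hom N (adjoint M) h"
  unfolding ab_hom_def adjoint_simps
proof (intro conjI ballI allI)
  fix y y' assume "y \<in> ab_carr N" "y' \<in> ab_carr N"
  show "h (ab_add N y y') = (\<lambda>x. h y x + h y' x)"
  proof
    fix x show "h (ab_add N y y') x = h y x + h y' x"
      using \<open>y \<in> ab_carr N\<close> \<open>y' \<in> ab_carr N\<close> by (cases "x \<in> ab_carr M") (simp_all add: add outside)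
  qed
next
  fix s y assume "y \<in> ab_carr N"
  show "h (ab_smul N s y) = (\<lambda>x. fps_reflect s * h y x)"
  proof
    fix x show "h (ab_smul N s y) x = fps_reflect s * h y x"
      using \<open>y \<in> ab_carr N\<close> by (cases "x \<in> ab_carr M") (simp_all add: smul outside)
  qed
next
  fix y assume "y \<in> ab_carr N"
  show "h (ab_a N y) = (\<lambda>x. - (if x \<in> ab_carr M then fps_X^2 * fps_deriv (h y x) - h y (ab_a M x) else 0))"
  proof
    fix x show "h (ab_a N y) x = - (if x \<in> ab_carr M then fps_X^2 * fps_deriv (h y x) - h y (ab_a M x) else 0)"
      using \<open>y \<in> ab_carr N\<close> by (cases "x \<in> ab_carr M") (simp_all add: a outside)
  qed
qed (use dual in blast)

locale ab_premod =
  fixes M :: "'v abmod"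
  assumes premodule: "ab_premodule M"
begin

abbreviation "C \<equiv> ab_carr M"
abbreviation "pl \<equiv> ab_add M"
abbreviation "sm \<equiv> ab_smul M"
abbreviation "z0 \<equiv> ab_zero M"
abbreviation "aa \<equiv> ab_a M"

lemma zero_closed [simp]: "z0 \<in> C"
  using premodule unfolding ab_premodule_def by (elim conjE) meson
lemma add_closed [simp]: "x \<in> C \<Longrightarrow> y \<in> C \<Longrightarrow> pl x y \<in> C"
  using premodule unfolding ab_premodule_def by (elim conjE) meson
lemma sm_closed [simp]: "x \<in> C \<Longrightarrow> sm s x \<in> C"
  using premodule unfolding ab_premodule_def by (elim conjE) meson
lemma a_closed [simp]: "x \<in> C \<Longrightarrow> aa x \<in> C"
  using premodule unfolding ab_premodule_def by (elim conjE) meson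
lemma add_assoc: "x \<in> C \<Longrightarrow> y \<in> C \<Longrightarrow> z \<in> C \<Longrightarrow> pl (pl x y) z = pl x (pl y z)"
  using premodule unfolding ab_premodule_def by (elim conjE) meson
lemma add_comm: "x \<in> C \<Longrightarrow> y \<in> C \<Longrightarrow> pl x y = pl y x"
  using premodule unfolding ab_premodule_def by (elim conjE) meson
lemma zero_add [simp]: "x \<in> C \<Longrightarrow> pl z0 x = x"
  using premodule unfolding ab_premodule_def by (elim conjE) meson
lemma ex_neg: "x \<in> C \<Longrightarrow> \<exists>y\<in>C. pl x y = z0"
  using premodule unfolding ab_premodule_def by (elim conjE) meson
lemma sm_add_right: "x \<in> C \<Longrightarrow> y \<in> C \<Longrightarrow> sm s (pl x y) = pl (sm s x) (sm s y)"
  using premodule unfolding ab_premodule_def by (elim conjE) meson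
lemma sm_add_left: "x \<in> C \<Longrightarrow> sm (s + t) x = pl (sm s x) (sm t x)"
  using premodule unfolding ab_premodule_def by (elim conjE) meson
lemma sm_mult: "x \<in> C \<Longrightarrow> sm (s * t) x = sm s (sm t x)"
  using premodule unfolding ab_premodule_def by (elim conjE) meson
lemma sm_one [simp]: "x \<in> C \<Longrightarrow> sm 1 x = x"
  using premodule unfolding ab_premodule_def by (elim conjE) meson
lemma a_add: "x \<in> C \<Longrightarrow> y \<in> C \<Longrightarrow> aa (pl x y) = pl (aa x) (aa y)"
  using premodule unfolding ab_premodule_def by (elim conjE) meson
lemma a_const: "x \<in> C \<Longrightarrow> aa (sm (fps_const c) x) = sm (fps_const c) (aa x)"
  using premodule unfolding ab_premodule_def by (elim conjE) meson
lemma a_X: "x \<in> C \<Longrightarrow> aa (sm fps_X x) = pl (sm fps_X (aa x)) (sm (fps_X^2) x)"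
  using premodule unfolding ab_premodule_def by (elim conjE) meson

lemma add_zero [simp]: "x \<in> C \<Longrightarrow> pl x z0 = x"
  using add_comm zero_add zero_closed by metis

lemma add_left_cancel:
  assumes "x \<in> C" "y \<in> C" "y' \<in> C" "pl x y = pl x y'" shows "y = y'"
proof -
  obtain n where n: "n \<in> C" "pl x n = z0" using ex_neg assms(1) by blast
  have "y = pl (pl n x) y" using n assms by (simp add: add_comm)
  also have "\<dots> = pl (pl n x) y'" using assms n by (simp add: add_assoc)
  also have "\<dots> = y'" using n assms by (simp add: add_comm)
  finally show ?thesis .
qed

lemma sm_zero_left [simp]: "x \<in> C \<Longrightarrow> sm 0 x = z0"
proof -
  assume x: "x \<in> C"
  have "pl (sm 0 x) (sm 0 x) = pl (sm 0 x) z0"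
    using sm_add_left[OF x, of 0 0] x by simp
  thus ?thesis using add_left_cancel x by (metis add_zero sm_closed zero_closed)
qed

lemma sm_zero_right [simp]: "sm s z0 = z0"
proof -
  have "sm s z0 = sm s (sm 0 z0)" by simp
  also have "\<dots> = sm (s * 0) z0" by (simp only: sm_mult zero_closed)
  also have "\<dots> = z0" by simp
  finally show ?thesis .
qed

lemma add_neg [simp]: "x \<in> C \<Longrightarrow> pl x (sm (-1) x) = z0"
proof -
  assume x: "x \<in> C"
  have "pl x (sm (-1) x) = pl (sm 1 x) (sm (-1) x)" using x by simp
  also have "\<dots> = sm (1 + -1) x" using x by (simp only: sm_add_left)
  also have "\<dots> = z0" using x by simp
  finally show ?thesis .
qed

lemma sm_sm [simp]: "x \<in> C \<Longrightarrow> sm s (sm t x) = sm (s * t) x"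
  by (simp add: sm_mult)

lemma eq_iff_diff_zero: "x \<in> C \<Longrightarrow> y \<in> C \<Longrightarrow> x = y \<longleftrightarrow> pl x (sm (-1) y) = z0"
proof
  assume "x \<in> C" "y \<in> C" "pl x (sm (-1) y) = z0"
  hence "pl (pl x (sm (-1) y)) y = y" by simp
  moreover have "pl (pl x (sm (-1) y)) y = x" using \<open>x\<in>C\<close> \<open>y\<in>C\<close>
    by (metis add_assoc add_comm add_neg add_zero sm_closed)
  ultimately show "x = y" by simp
qed simp

lemma add_swap: "a \<in> C \<Longrightarrow> b \<in> C \<Longrightarrow> c \<in> C \<Longrightarrow> d \<in> C \<Longrightarrow>
   pl (pl a b) (pl c d) = pl (pl a c) (pl b d)"
  by (metis add_assoc add_comm add_closed)

lemma lincomb_closed [simp]: "set vs \<subseteq> C \<Longrightarrow> lincomb M cs vs \<in> C"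
proof (induct vs arbitrary: cs)
  case (Cons v vs) thus ?case by (cases cs) auto
qed simp

lemma lincomb_sm: "set vs \<subseteq> C \<Longrightarrow> sm s (lincomb M cs vs) = lincomb M (map ((*) s) cs) vs"
proof (induct vs arbitrary: cs)
  case (Cons v vs) thus ?case by (cases cs) (auto simp: sm_add_right)
qed simp

lemma lincomb_replicate_zero: "set vs \<subseteq> C \<Longrightarrow> lincomb M (replicate k 0) vs = z0"
proof (induct vs arbitrary: k)
  case (Cons v vs) thus ?case by (cases k) auto
qed simp

lemma lincomb_append: "length cs1 = length vs1 \<Longrightarrow> set vs1 \<subseteq> C \<Longrightarrow> set vs2 \<subseteq> C \<Longrightarrow>
  lincomb M (cs1 @ cs2) (vs1 @ vs2) = pl (lincomb M cs1 vs1) (lincomb M cs2 vs2)"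
proof (induct vs1 arbitrary: cs1)
  case (Cons v vs) thus ?case by (cases cs1) (auto simp: add_assoc)
qed simp

lemma lincomb_shift:
  assumes "set vs \<subseteq> C" "e \<in> C"
  shows "lincomb M ds (map (\<lambda>v. pl v (sm (\<rho> v) e)) vs) =
    pl (lincomb M ds vs) (sm (sum_list (map2 (\<lambda>d v. d * \<rho> v) ds vs)) e)"
  using assms(1)
proof (induct vs arbitrary: ds)
  case Nil thus ?case using assms by simp
next
  case (Cons v vs)
  show ?case
  proof (cases ds)
    case Nil thus ?thesis using assms by simp
  next
    case (Cons d ds')
    let ?R = "sm (sum_list (map2 (\<lambda>d v. d * \<rho> v) ds' vs)) e"
    have v: "v \<in> C" "set vs \<subseteq> C" using Cons.prems by auto
    have "lincomb M ds (map (\<lambda>v. pl v (sm (\<rho> v) e)) (v # vs)) =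
      pl (sm d (pl v (sm (\<rho> v) e))) (pl (lincomb M ds' vs) ?R)"
      using Cons Cons.hyps[OF v(2)] by simp
    also have "\<dots> = pl (pl (sm d v) (sm (d * \<rho> v) e)) (pl (lincomb M ds' vs) ?R)"
      using v assms by (simp add: sm_add_right)
    also have "\<dots> = pl (pl (sm d v) (lincomb M ds' vs)) (pl (sm (d * \<rho> v) e) ?R)"
      using v assms by (simp add: add_swap)
    also have "\<dots> = pl (pl (sm d v) (lincomb M ds' vs)) (sm (d * \<rho> v + sum_list (map2 (\<lambda>d v. d * \<rho> v) ds' vs)) e)"
      using assms by (simp add: sm_add_left)
    finally show ?thesis using Cons by simp
  qed
qed

lemma lincomb_functional:
  assumes add: "\<And>x y. x \<in> C \<Longrightarrow> y \<in> C \<Longrightarrow> \<phi> (pl x y) = \<phi> x + \<phi> y"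
    and smul: "\<And>s x. x \<in> C \<Longrightarrow> \<phi> (sm s x) = s * \<phi> x"
    and "set vs \<subseteq> C"
  shows "\<phi> (lincomb M cs vs) = sum_list (map2 (\<lambda>c v. c * \<phi> v) cs vs)"
proof -
  have zero: "\<phi> z0 = 0" using smul[of z0 0] by simp
  show ?thesis using assms(3)
  proof (induct vs arbitrary: cs)
    case (Cons v vs) thus ?case by (cases cs) (auto simp: add smul zero)
  qed (simp add: zero)
qed

lemma basis_coeffs_unique:
  assumes "is_basis M vs" "length cs = length vs" "length ds = length vs"
    "lincomb M cs vs = lincomb M ds vs"
  shows "cs = ds"
proof -
  have "lincomb M cs vs \<in> C" using assms(1) unfolding is_basis_def by simp
  then obtain es where "\<forall>e. length e = length vs \<and> lincomb M e vs = lincomb M cs vs \<longrightarrow> e = es"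
    using assms(1) unfolding is_basis_def by metis
  thus ?thesis using assms by metis
qed

lemma basis_coeffs_exist:
  assumes "is_basis M vs" "x \<in> C"
  shows "\<exists>cs. length cs = length vs \<and> lincomb M cs vs = x"
  using assms unfolding is_basis_def by metis

lemma torsion_free_if_basis:
  assumes "is_basis M vs" "x \<in> C" "sm s x = z0" "s \<noteq> 0"
  shows "x = z0"
proof -
  have vs: "set vs \<subseteq> C" using assms(1) unfolding is_basis_def by simp
  obtain cs where cs: "length cs = length vs" "lincomb M cs vs = x"
    using basis_coeffs_exist assms by blast
  have "lincomb M (map ((*) s) cs) vs = lincomb M (replicate (length vs) 0) vs"
    using lincomb_sm[OF vs, of s cs] cs assms(3) lincomb_replicate_zero[OF vs] by simp
  hence "map ((*) s) cs = replicate (length vs) 0"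
    using basis_coeffs_unique[OF assms(1)] cs by simp
  hence "cs = replicate (length vs) 0" using assms(4) cs
    by (simp add: list_eq_iff_nth_eq)
  thus ?thesis using cs lincomb_replicate_zero[OF vs] by simp
qed

lemma sub_premodule: assumes "is_sub M K" shows "ab_premodule (restr M K)"
proof -
  have KC: "\<And>x. x \<in> K \<Longrightarrow> x \<in> C" and Ksm: "\<And>s x. x \<in> K \<Longrightarrow> sm s x \<in> K"
    using assms unfolding is_sub_def by auto
  have "\<forall>x\<in>K. \<exists>y\<in>K. pl x y = z0"
    using KC Ksm by (metis add_neg)
  with assms show ?thesis
    unfolding ab_premodule_def restr_simps is_sub_def
    using KC add_assoc add_comm sm_add_right sm_add_left sm_mult a_add a_const a_X by simp
qed

end

lemma sum_map2_nth_0: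
  assumes "\<forall>v\<in>set vs. fps_nth (\<pi> v) 0 = 0"
  shows "fps_nth (sum_list (map2 (\<lambda>c v. c * \<pi> v) cs vs)) 0 = (0::complex)"
  using assms
proof (induct vs arbitrary: cs)
  case (Cons v vs) thus ?case by (cases cs) (auto simp: fps_add_nth)
qed simp

lemma sum_map2_mult_right:
  fixes \<pi> :: "'v \<Rightarrow> complex fps"
  shows "sum_list (map2 (\<lambda>x y. - (x * (\<pi> y * r))) ds vs) = - (sum_list (map2 (\<lambda>x y. x * \<pi> y) ds vs) * r)"
proof (induct vs arbitrary: ds)
  case (Cons v vs) thus ?case by (cases ds) (auto simp: algebra_simps)
qed simp

context ab_premod
begin

lemma lincomb_shifted_basis:
  assumes es: "set es1 \<subseteq> C" "set es2 \<subseteq> C" "e \<in> C" and ds: "length ds = length es1 + length es2"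
  shows "lincomb M ds (map (\<lambda>v. pl v (sm (- (\<pi> v * r)) e)) (es1 @ es2)) =
    lincomb M (take (length es1) ds @ (- sum_list (map2 (\<lambda>c v. c * \<pi> v) ds (es1 @ es2)) * r)
      # drop (length es1) ds) (es1 @ e # es2)"
proof -
  let ?R = "- sum_list (map2 (\<lambda>c v. c * \<pi> v) ds (es1 @ es2)) * r"
  let ?d1 = "take (length es1) ds" and ?d2 = "drop (length es1) ds"
  have "lincomb M ds (map (\<lambda>v. pl v (sm (- (\<pi> v * r)) e)) (es1 @ es2)) =
      pl (lincomb M ds (es1 @ es2)) (sm ?R e)"
    using lincomb_shift[of "es1 @ es2" e ds "\<lambda>v. - (\<pi> v * r)"] es by (simp add: sum_map2_mult_right)
  also have "lincomb M ds (es1 @ es2) = pl (lincomb M ?d1 es1) (lincomb M ?d2 es2)"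
    using lincomb_append[of ?d1 es1 es2 ?d2] ds es by simp
  also have "pl (pl (lincomb M ?d1 es1) (lincomb M ?d2 es2)) (sm ?R e) =
      pl (lincomb M ?d1 es1) (pl (sm ?R e) (lincomb M ?d2 es2))"
    using es by (metis add_assoc add_comm lincomb_closed sm_closed)
  also have "\<dots> = lincomb M (?d1 @ ?R # ?d2) (es1 @ e # es2)"
    using lincomb_append[of ?d1 es1 "e # es2" "?R # ?d2"] ds es by simp
  finally show ?thesis .
qed

lemma kernel_basis:
  assumes b: "is_basis M (es1 @ e # es2)"
    and padd: "\<And>x y. x \<in> C \<Longrightarrow> y \<in> C \<Longrightarrow> \<pi> (pl x y) = \<pi> x + \<pi> y"
    and psm: "\<And>s x. x \<in> C \<Longrightarrow> \<pi> (sm s x) = s * \<pi> x"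
    and r: "\<pi> e * r = 1"
  shows "is_basis (restr M {v\<in>C. \<pi> v = 0}) (map (\<lambda>v. pl v (sm (- (\<pi> v * r)) e)) (es1 @ es2))"
    (is "is_basis (restr M ?K) ?ks")
proof -
  let ?es = "es1 @ e # es2" and ?\<Sigma> = "\<lambda>cs vs. sum_list (map2 (\<lambda>c v. c * \<pi> v) cs vs)"
  have esC: "set ?es \<subseteq> C" using b unfolding is_basis_def by simp
  hence eC: "e \<in> C" and es12: "set es1 \<subseteq> C" "set es2 \<subseteq> C" by auto
  have \<pi>_lincomb: "\<pi> (lincomb M cs ?es) = ?\<Sigma> cs ?es" for cs
    by (rule lincomb_functional) (use esC in \<open>auto simp: padd psm\<close>)
  have "\<pi> (pl v (sm (- (\<pi> v * r)) e)) = 0" if "v \<in> C" for v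
    using that eC r by (simp add: padd psm algebra_simps)
  hence ksK: "set ?ks \<subseteq> ?K" using es12 eC by auto
  show ?thesis unfolding is_basis_def
  proof (intro conjI ballI)
    show "set ?ks \<subseteq> ab_carr (restr M ?K)" using ksK by simp
  next
    fix v assume "v \<in> ab_carr (restr M ?K)"
    hence v: "v \<in> C" "\<pi> v = 0" by auto
    obtain cv where cv: "length cv = length ?es" "lincomb M cv ?es = v"
      using basis_coeffs_exist[OF b v(1)] by blast
    define c1 c c2 where "c1 = take (length es1) cv" and "c = cv ! length es1"
      and "c2 = drop (Suc (length es1)) cv"
    have cv_split: "cv = c1 @ c # c2" using cv(1) unfolding c1_def c_def c2_def
      by (simp add: id_take_nth_drop)
    have len: "length c1 = length es1" "length c2 = length es2" using cv(1) cv_split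
      unfolding c1_def c2_def by auto
    have "0 = ?\<Sigma> c1 es1 + c * \<pi> e + ?\<Sigma> c2 es2"
      using v(2) \<pi>_lincomb[of cv] cv(2) cv_split len by (simp add: zip_append add.assoc)
    hence "c = c * (\<pi> e * r) - (?\<Sigma> c1 es1 + c * \<pi> e + ?\<Sigma> c2 es2) * r" by (simp add: r)
    hence c: "c = - ?\<Sigma> (c1 @ c2) (es1 @ es2) * r" using len by (simp add: zip_append algebra_simps)
    show "\<exists>!ds. length ds = length ?ks \<and> lincomb (restr M ?K) ds ?ks = v"
    proof (rule ex1I[of _ "c1 @ c2"])
      show "length (c1 @ c2) = length ?ks \<and> lincomb (restr M ?K) (c1 @ c2) ?ks = v"
        using lincomb_shifted_basis[OF es12 eC, of "c1 @ c2" \<pi> r] len c cv cv_split by simp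
    next
      fix ds assume ds: "length ds = length ?ks \<and> lincomb (restr M ?K) ds ?ks = v"
      hence lds: "length ds = length es1 + length es2" by simp
      have "lincomb M (take (length es1) ds @ (- ?\<Sigma> ds (es1 @ es2) * r) # drop (length es1) ds) ?es
          = lincomb M cv ?es" using lincomb_shifted_basis[OF es12 eC lds] ds cv by simp
      hence "take (length es1) ds @ (- ?\<Sigma> ds (es1 @ es2) * r) # drop (length es1) ds = cv"
        using basis_coeffs_unique[OF b] cv lds by simp
      hence "take (length es1) ds = c1" "drop (length es1) ds = c2"
        using cv_split lds len by (simp_all add: append_eq_append_conv)
      thus "ds = c1 @ c2" by (metis append_take_drop_id)
    qed
  qed
qed

lemma kernel_has_rank:
  assumes b: "is_basis M es"
    and padd: "\<And>x y. x \<in> C \<Longrightarrow> y \<in> C \<Longrightarrow> \<pi> (pl x y) = \<pi> x + \<pi> y"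
    and psm: "\<And>s x. x \<in> C \<Longrightarrow> \<pi> (sm s x) = s * \<pi> x"
    and u: "u \<in> C" "\<pi> u = 1"
  shows "has_rank (restr M {v\<in>C. \<pi> v = 0}) (length es - 1)"
proof -
  have esC: "set es \<subseteq> C" using b unfolding is_basis_def by simp
  obtain cu where cu: "length cu = length es" "lincomb M cu es = u"
    using basis_coeffs_exist[OF b u(1)] by blast
  have "\<pi> u = sum_list (map2 (\<lambda>c v. c * \<pi> v) cu es)"
    using lincomb_functional[of \<pi> es cu] esC cu(2) padd psm by simp
  hence "\<exists>e\<in>set es. fps_nth (\<pi> e) 0 \<noteq> 0" using sum_map2_nth_0[of es \<pi> cu] u(2) by auto
  then obtain e es1 es2 where e: "es = es1 @ e # es2" "fps_nth (\<pi> e) 0 \<noteq> 0"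
    by (metis split_list)
  have "\<pi> e * inverse (\<pi> e) = 1" using e(2) by (rule inverse_mult_eq_1')
  from kernel_basis[OF b[unfolded e(1)] padd psm this] e(1) show ?thesis
    unfolding has_rank_def by (intro exI[of _ "map _ (es1 @ es2)"]) simp
qed

end

locale ab_quot = ab_premod M for M :: "'v abmod" +
  fixes F :: "'v set"
  assumes sub: "is_sub M F"
begin

abbreviation "cs \<equiv> coset M F"
abbreviation "Q \<equiv> quot M F"

lemma F_sub: "f \<in> F \<Longrightarrow> f \<in> C" using sub unfolding is_sub_def by blast
lemma F_zero[simp]: "z0 \<in> F" using sub unfolding is_sub_def by blast
lemma F_add[simp]: "x \<in> F \<Longrightarrow> y \<in> F \<Longrightarrow> pl x y \<in> F" using sub unfolding is_sub_def by blast
lemma F_sm[simp]: "x \<in> F \<Longrightarrow> sm s x \<in> F" using sub unfolding is_sub_def by blast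
lemma F_a[simp]: "x \<in> F \<Longrightarrow> aa x \<in> F" using sub unfolding is_sub_def by blast

lemma mem_coset: "y \<in> cs x \<longleftrightarrow> (\<exists>f\<in>F. y = pl x f)"
  unfolding coset_def by blast

lemma coset_self: "x \<in> C \<Longrightarrow> x \<in> cs x"
  unfolding mem_coset by (metis F_zero add_zero)

lemma coset_shift: assumes "x \<in> C" "f \<in> F" shows "cs (pl x f) = cs x"
proof
  show "cs (pl x f) \<subseteq> cs x"
    using assms F_sub unfolding coset_def by (auto simp: add_assoc)
next
  show "cs x \<subseteq> cs (pl x f)"
  proof
    fix y assume "y \<in> cs x"
    then obtain g where g: "g \<in> F" "y = pl x g" unfolding mem_coset by blast
    have fC: "f \<in> C" "g \<in> C" using assms g F_sub by auto
    have "y = pl (pl x f) (pl g (sm (-1) f))"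
      using g fC assms by (metis add_assoc add_comm add_neg add_zero sm_closed add_closed)
    moreover have "pl g (sm (-1) f) \<in> F" using g assms by simp
    ultimately show "y \<in> cs (pl x f)" unfolding mem_coset by blast
  qed
qed

lemma coset_eq_iff: assumes "x \<in> C" "y \<in> C" shows "cs x = cs y \<longleftrightarrow> pl x (sm (-1) y) \<in> F"
proof
  assume "cs x = cs y"
  hence "x \<in> cs y" using coset_self assms by blast
  then obtain f where f: "f \<in> F" "x = pl y f" unfolding mem_coset by blast
  have "pl x (sm (-1) y) = f" using f F_sub[OF f(1)] assms
    by (metis add_assoc add_comm add_neg add_zero sm_closed)
  thus "pl x (sm (-1) y) \<in> F" using f by simp
next
  assume d: "pl x (sm (-1) y) \<in> F"
  have "x = pl y (pl x (sm (-1) y))" using assms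
    by (metis add_assoc add_comm add_neg add_zero sm_closed)
  hence "cs x = cs (pl y (pl x (sm (-1) y)))" by simp
  also have "\<dots> = cs y" using coset_shift d assms by blast
  finally show "cs x = cs y" .
qed

lemma coset_rep: assumes "x \<in> C" shows "\<exists>f\<in>F. (SOME u. u \<in> cs x) = pl x f"
proof -
  have "(SOME u. u \<in> cs x) \<in> cs x" using coset_self[OF assms] by (rule someI)
  thus ?thesis unfolding mem_coset by blast
qed

lemma quot_carr: "ab_carr Q = cs ` C" by (simp add: quot_def)
lemma quot_zero: "ab_zero Q = cs z0" by (simp add: quot_def)

lemma quot_add: assumes "x \<in> C" "y \<in> C" shows "ab_add Q (cs x) (cs y) = cs (pl x y)"
proof -
  obtain f g where fg: "f \<in> F" "g \<in> F" "(SOME u. u \<in> cs x) = pl x f" "(SOME u. u \<in> cs y) = pl y g"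
    using coset_rep assms by metis
  have C: "f \<in> C" "g \<in> C" using fg F_sub by auto
  have "pl (pl x f) (pl y g) = pl (pl x y) (pl f g)" using C assms by (metis add_assoc add_comm add_closed)
  thus ?thesis using fg assms C by (simp add: quot_def coset_shift)
qed

lemma quot_smul: assumes "x \<in> C" shows "ab_smul Q s (cs x) = cs (sm s x)"
proof -
  obtain f where f: "f \<in> F" "(SOME u. u \<in> cs x) = pl x f" using coset_rep assms by metis
  thus ?thesis using assms F_sub[OF f(1)] by (simp add: quot_def sm_add_right coset_shift)
qed

lemma quot_a: assumes "x \<in> C" shows "ab_a Q (cs x) = cs (aa x)"
proof -
  obtain f where f: "f \<in> F" "(SOME u. u \<in> cs x) = pl x f" using coset_rep assms by metis
  thus ?thesis using assms F_sub[OF f(1)] by (simp add: quot_def a_add coset_shift)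
qed

lemma quot_premodule: "ab_premodule Q"
proof -
  have neg: "\<forall>X\<in>ab_carr Q. \<exists>Y\<in>ab_carr Q. ab_add Q X Y = ab_zero Q"
    unfolding quot_carr quot_zero
  proof
    fix X assume "X \<in> cs ` C"
    then obtain x where x: "x \<in> C" "X = cs x" by blast
    then obtain y where "y \<in> C" "pl x y = z0" using ex_neg by blast
    thus "\<exists>Y\<in>cs ` C. ab_add Q X Y = cs z0"
      by (intro bexI[of _ "cs y"]) (use x quot_add[of x y] in auto)
  qed
  show ?thesis unfolding ab_premodule_def
  proof (intro conjI)
    show "\<forall>x\<in>ab_carr Q. \<exists>y\<in>ab_carr Q. ab_add Q x y = ab_zero Q" by (rule neg)
    show "ab_zero Q \<in> ab_carr Q" by (simp add: quot_zero quot_carr)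
    show "\<forall>x\<in>ab_carr Q. \<forall>y\<in>ab_carr Q. ab_add Q x y \<in> ab_carr Q" by (auto simp: quot_carr quot_add)
    show "\<forall>s. \<forall>x\<in>ab_carr Q. ab_smul Q s x \<in> ab_carr Q" by (auto simp: quot_carr quot_smul)
    show "\<forall>x\<in>ab_carr Q. ab_a Q x \<in> ab_carr Q" by (auto simp: quot_carr quot_a)
    show "\<forall>x\<in>ab_carr Q. \<forall>y\<in>ab_carr Q. \<forall>z\<in>ab_carr Q. ab_add Q (ab_add Q x y) z = ab_add Q x (ab_add Q y z)"
      by (auto simp: quot_carr quot_add add_assoc)
    show "\<forall>x\<in>ab_carr Q. \<forall>y\<in>ab_carr Q. ab_add Q x y = ab_add Q y x"
      by (clarsimp simp: quot_carr quot_add) (metis add_comm)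
    show "\<forall>x\<in>ab_carr Q. ab_add Q (ab_zero Q) x = x" by (auto simp: quot_carr quot_add quot_zero)
    show "\<forall>s. \<forall>x\<in>ab_carr Q. \<forall>y\<in>ab_carr Q. ab_smul Q s (ab_add Q x y) = ab_add Q (ab_smul Q s x) (ab_smul Q s y)"
      by (auto simp: quot_carr quot_add quot_smul sm_add_right)
    show "\<forall>s t. \<forall>x\<in>ab_carr Q. ab_smul Q (s + t) x = ab_add Q (ab_smul Q s x) (ab_smul Q t x)"
      by (auto simp: quot_carr quot_add quot_smul sm_add_left)
    show "\<forall>s t. \<forall>x\<in>ab_carr Q. ab_smul Q (s * t) x = ab_smul Q s (ab_smul Q t x)"
      by (auto simp: quot_carr quot_smul)
    show "\<forall>x\<in>ab_carr Q. ab_smul Q 1 x = x" by (auto simp: quot_carr quot_smul)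
    show "\<forall>x\<in>ab_carr Q. \<forall>y\<in>ab_carr Q. ab_a Q (ab_add Q x y) = ab_add Q (ab_a Q x) (ab_a Q y)"
      by (auto simp: quot_carr quot_add quot_a a_add)
    show "\<forall>c. \<forall>x\<in>ab_carr Q. ab_a Q (ab_smul Q (fps_const c) x) = ab_smul Q (fps_const c) (ab_a Q x)"
      by (auto simp: quot_carr quot_smul quot_a a_const)
    show "\<forall>x\<in>ab_carr Q. ab_a Q (ab_smul Q fps_X x) = ab_add Q (ab_smul Q fps_X (ab_a Q x)) (ab_smul Q (fps_X\<^sup>2) x)"
      using a_X by (auto simp: quot_carr quot_add quot_smul quot_a)
  qed
qed

lemma lincomb_quot: "set vs \<subseteq> C \<Longrightarrow> lincomb Q cs' (map cs vs) = cs (lincomb M cs' vs)"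
proof (induct vs arbitrary: cs')
  case Nil thus ?case by (simp add: quot_zero)
next
  case (Cons v vs) thus ?case
    by (cases cs') (auto simp: quot_zero quot_add quot_smul)
qed

lemma quot_basis_complement:
  assumes KC: "K \<subseteq> C" and Kb: "is_basis (restr M K) ks"
    and K0: "z0 \<in> K" and Kadd: "\<forall>x\<in>K. \<forall>y\<in>K. pl x y \<in> K" and Ksm: "\<forall>s. \<forall>x\<in>K. sm s x \<in> K"
    and dec: "\<forall>v\<in>C. \<exists>k\<in>K. cs v = cs k" and inter: "\<forall>k\<in>K. k \<in> F \<longrightarrow> k = z0"
  shows "is_basis Q (map cs ks)"
proof -
  have ksK: "set ks \<subseteq> K" using Kb unfolding is_basis_def by simp
  hence ksC: "set ks \<subseteq> C" using KC by blast
  have linK: "lincomb M d ks \<in> K" for d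
    using ksK
  proof (induct ks arbitrary: d)
    case (Cons k ks) thus ?case using Kadd Ksm K0 by (cases d) auto
  qed (simp add: K0)
  show ?thesis unfolding is_basis_def
  proof (intro conjI ballI)
    show "set (map cs ks) \<subseteq> ab_carr Q" using ksC by (auto simp: quot_carr)
  next
    fix X assume "X \<in> ab_carr Q"
    then obtain v where v: "v \<in> C" "X = cs v" by (auto simp: quot_carr)
    then obtain k where k: "k \<in> K" "cs v = cs k" using dec by blast
    obtain d where d: "length d = length ks" "lincomb M d ks = k"
      using Kb k(1) unfolding is_basis_def by auto
    show "\<exists>!d. length d = length (map cs ks) \<and> lincomb Q d (map cs ks) = X"
    proof (rule ex1I[of _ d])
      show "length d = length (map cs ks) \<and> lincomb Q d (map cs ks) = X"
        using d k v lincomb_quot[OF ksC] by simp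
    next
      fix e assume e: "length e = length (map cs ks) \<and> lincomb Q e (map cs ks) = X"
      hence "cs (lincomb M e ks) = cs (lincomb M d ks)" using d k v lincomb_quot[OF ksC] by simp
      hence "pl (lincomb M e ks) (sm (-1) (lincomb M d ks)) \<in> F" using coset_eq_iff ksC by simp
      moreover have "pl (lincomb M e ks) (sm (-1) (lincomb M d ks)) \<in> K"
        using Kadd Ksm linK[of e] linK[of d] by simp
      ultimately have "lincomb M e ks = lincomb M d ks" using inter eq_iff_diff_zero ksC by simp
      moreover have "\<exists>!c. length c = length ks \<and> lincomb M c ks = lincomb M d ks"
        using Kb linK[of d] unfolding is_basis_def by simp
      ultimately show "e = d" using e d(1) unfolding Ex1_def by (metis length_map)
    qed
  qed
qed

end

section \<open>Hermitian modules\<close>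

locale herm_mod = ab_premod E for E :: "'v abmod" +
  fixes H :: "'v \<Rightarrow> 'v \<Rightarrow> complex fps"
  assumes form: "herm_form E H" and nondeg: "herm_nondeg E H"
begin

lemma H_add_left: "v \<in> C \<Longrightarrow> v' \<in> C \<Longrightarrow> w \<in> C \<Longrightarrow> H (pl v v') w = H v w + H v' w"
  using form unfolding herm_form_def by blast

lemma H_add_right: "v \<in> C \<Longrightarrow> w \<in> C \<Longrightarrow> w' \<in> C \<Longrightarrow> H v (pl w w') = H v w + H v w'"
  using form unfolding herm_form_def conj_simps by blast

lemma H_smul_left: "v \<in> C \<Longrightarrow> w \<in> C \<Longrightarrow> H (sm s v) w = s * H v w"
  using form unfolding herm_form_def by blast

lemma H_smul_right: "v \<in> C \<Longrightarrow> w \<in> C \<Longrightarrow> H v (sm s w) = fps_reflect s * H v w"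
proof -
  assume vw: "v \<in> C" "w \<in> C"
  have "\<forall>t. H v (sm (fps_reflect t) w) = t * H v w"
    using form vw unfolding herm_form_def conj_simps by blast
  from this[rule_format, of "fps_reflect s"] show ?thesis by simp
qed

lemma H_sym: "v \<in> C \<Longrightarrow> w \<in> C \<Longrightarrow> H w v = fps_reflect (H v w)"
  using form unfolding herm_form_def by blast

lemma H_a: "v \<in> C \<Longrightarrow> w \<in> C \<Longrightarrow> fps_X^2 * fps_deriv (H v w) = H (aa v) w + H v (sm (-1) (aa w))"
  using form unfolding herm_form_def conj_simps E_elem_0_a by blast

lemma H_a_right: "v \<in> C \<Longrightarrow> w \<in> C \<Longrightarrow> H v (aa w) = H (aa v) w - fps_X^2 * fps_deriv (H v w)"
  using H_a[of v w] H_smul_right[of v "aa w" "-1"] by simp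

lemma H_zero_left [simp]: "w \<in> C \<Longrightarrow> H z0 w = 0"
  using H_smul_left[of z0 w 0] by simp

lemma H_zero_right [simp]: "v \<in> C \<Longrightarrow> H v z0 = 0"
  using H_smul_right[of v z0 0] by simp

lemma eq_if_H_right_eq:
  assumes "x \<in> C" "y \<in> C" "\<And>u. u \<in> C \<Longrightarrow> H u x = H u y" shows "x = y"
proof -
  have "inj_on (form_map E H) C"
    using nondeg unfolding herm_nondeg_iff_form_map ab_iso_map_def bij_betw_def by simp
  moreover have "form_map E H x = form_map E H y" unfolding form_map_def using assms(3) by auto
  ultimately show ?thesis using assms(1,2) by (meson inj_onD)
qed

lemma functional_represented:
  assumes "\<And>x y. x \<in> C \<Longrightarrow> y \<in> C \<Longrightarrow> \<phi> (pl x y) = \<phi> x + \<phi> y"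
    and "\<And>s x. x \<in> C \<Longrightarrow> \<phi> (sm s x) = s * \<phi> x"
  shows "\<exists>y\<in>C. \<forall>u\<in>C. \<phi> u = H u y"
proof -
  let ?\<psi> = "\<lambda>x. if x \<in> C then \<phi> x else 0"
  have "?\<psi> \<in> ab_carr (adjoint E)" unfolding adjoint_simps dual_carr using assms by auto
  moreover have "form_map E H ` C = ab_carr (adjoint E)"
    using nondeg unfolding herm_nondeg_iff_form_map ab_iso_map_def bij_betw_def by simp
  ultimately obtain y where y: "y \<in> C" "?\<psi> = form_map E H y" by auto
  have "\<phi> u = H u y" if "u \<in> C" for u using fun_cong[OF y(2), of u] that by (simp add: form_map_def)
  thus ?thesis using y(1) by blast
qed

text \<open>The axioms of a premodule give the Leibniz rule \<open>a(S x) = S a x + b\<^sup>2 S' x\<close> only for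
  constants and for \<open>S = b\<close>; nondegeneracy of \<open>H\<close> extends it to all power series.\<close>

lemma a_smul:
  assumes v: "v \<in> C"
  shows "aa (sm s v) = pl (sm s (aa v)) (sm (fps_X^2 * fps_deriv s) v)"
proof (rule eq_if_H_right_eq)
  show "aa (sm s v) \<in> C" "pl (sm s (aa v)) (sm (fps_X^2 * fps_deriv s) v) \<in> C" using v by auto
  fix u assume u: "u \<in> C"
  have "H u (aa (sm s v)) = H (aa u) (sm s v) - fps_X^2 * fps_deriv (H u (sm s v))"
    using u v by (simp add: H_a_right)
  also have "\<dots> = fps_reflect s * H (aa u) v - fps_X^2 * fps_deriv (fps_reflect s * H u v)"
    using u v by (simp add: H_smul_right)
  also have "\<dots> = fps_reflect s * (H (aa u) v - fps_X^2 * fps_deriv (H u v))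
       + fps_X^2 * (- fps_deriv (fps_reflect s)) * H u v"
    by (simp add: fps_deriv_mult algebra_simps)
  also have "\<dots> = H u (pl (sm s (aa v)) (sm (fps_X^2 * fps_deriv s) v))"
    using u v by (simp add: H_add_right H_smul_right H_a_right fps_reflect_deriv)
  finally show "H u (aa (sm s v)) = H u (pl (sm s (aa v)) (sm (fps_X^2 * fps_deriv s) v))" .
qed

end

section \<open>Isotropic eigenvectors\<close>

lemma (in ab_premod) elementary_sub_generator:
  assumes sub: "is_sub M F" and iso: "ab_isomorphic (restr M F) (E_elem f)"
  shows "\<exists>x\<in>F. F = {sm s x | s. True} \<and> aa x = sm (fps_const f * fps_X) x \<and> x \<noteq> z0"
proof -
  obtain h where h: "ab_iso_map (restr M F) (E_elem f) h" using iso unfolding ab_isomorphic_def by blast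
  have hom: "ab_hom (restr M F) (E_elem f) h" and bij: "bij_betw h F UNIV"
    using h unfolding ab_iso_map_def by auto
  have hsm: "\<And>s v. v \<in> F \<Longrightarrow> h (sm s v) = s * h v" using hom unfolding ab_hom_def by simp
  have ha: "\<And>v. v \<in> F \<Longrightarrow> h (aa v) = fps_const f * fps_X * h v + fps_X^2 * fps_deriv (h v)"
    using hom unfolding ab_hom_def by simp
  have inj: "inj_on h F" using bij by (simp add: bij_betw_def)
  have FC: "F \<subseteq> C" and Fsm: "\<And>s v. v \<in> F \<Longrightarrow> sm s v \<in> F" and Fa: "\<And>v. v \<in> F \<Longrightarrow> aa v \<in> F"
    using sub unfolding is_sub_def by auto
  obtain x where x: "x \<in> F" "h x = 1" using bij by (metis UNIV_I bij_betw_iff_bijections)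
  have eqF: "F = {sm s x | s. True}"
  proof
    show "F \<subseteq> {sm s x | s. True}"
    proof
      fix v assume v: "v \<in> F"
      have "h (sm (h v) x) = h v" using hsm[OF x(1)] x(2) by simp
      hence "sm (h v) x = v" using inj v Fsm[OF x(1)] by (meson inj_onD)
      hence "v = sm (h v) x" by simp
      thus "v \<in> {sm s x | s. True}" by blast
    qed
  qed (use Fsm x in auto)
  have "h (aa x) = h (sm (fps_const f * fps_X) x)" using ha[OF x(1)] hsm[OF x(1)] x(2) by simp
  hence "aa x = sm (fps_const f * fps_X) x" using inj Fa[OF x(1)] Fsm[OF x(1)] by (meson inj_onD)
  moreover have "x \<noteq> z0"
  proof
    assume "x = z0"
    hence "h x = h (sm 0 x)" using FC x(1) by auto
    thus False using hsm[OF x(1), of 0] x(2) by simp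
  qed
  ultimately show ?thesis using x eqF by blast
qed

lemma (in ab_premod) add_eq_zero_imp_neg:
  assumes "x \<in> C" "y \<in> C" "pl x y = z0" shows "y = sm (-1) x"
proof -
  have "y = pl (pl x y) (sm (-1) x)" using assms(1,2) by (metis add_assoc add_comm add_neg add_zero sm_closed)
  thus ?thesis using assms by simp
qed

lemma (in ab_quot) normal_sub_saturated:
  assumes "normal_sub M F" "u \<in> C" "sm s u \<in> F" "s \<noteq> 0"
  shows "u \<in> F"
proof -
  interpret quotient: ab_premod Q by unfold_locales (rule quot_premodule)
  obtain vs where vs: "is_basis Q vs" using assms(1) unfolding normal_sub_def has_rank_def by blast
  have "ab_smul Q s (cs u) = cs z0" using quot_smul[OF assms(2)] coset_eq_iff[of "sm s u" z0] assms by simp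
  hence "cs u = cs z0"
    using quotient.torsion_free_if_basis[OF vs, of "cs u" s] assms(2,4) by (simp add: quot_carr quot_zero)
  thus ?thesis using coset_eq_iff[of u z0] assms(2) by simp
qed

context herm_mod
begin

lemma torsion_free: assumes "v \<in> C" "sm s v = z0" "s \<noteq> 0" shows "v = z0"
proof (rule eq_if_H_right_eq)
  fix u assume u: "u \<in> C"
  have "fps_reflect s * H u v = 0" using H_smul_right[OF u assms(1), of s] assms(2) u by simp
  thus "H u v = H u z0" using assms(3) u by simp
qed (use assms in auto)

lemma anisotropic_eigenvector_norm:
  assumes x: "x \<in> C" "aa x = sm (fps_const f * fps_X) x" and nz: "H x x \<noteq> 0"
  shows "\<exists>p. f = of_nat p \<and> H x x = fps_const (fps_nth (H x x) (2*p)) * fps_X^(2*p) \<and> fps_nth (H x x) (2*p) \<noteq> 0"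
proof -
  have "fps_X^2 * fps_deriv (H x x) = H (aa x) x - H x (aa x)" using H_a_right[OF x(1) x(1)] by simp
  also have "\<dots> = fps_const (f + f) * fps_X * H x x"
  proof -
    have const_double: "fps_const (f * 2) = fps_const f * 2" by (metis fps_const_add mult_2_right)
    show ?thesis using x const_double by (simp add: H_smul_left H_smul_right algebra_simps)
  qed
  finally obtain k where k: "f + f = of_nat k" "H x x = fps_const (fps_nth (H x x) k) * fps_X^k"
    "fps_nth (H x x) k \<noteq> 0" using X2_deriv_eq_nonzero nz by blast
  have "H x x = fps_reflect (H x x)" using H_sym[OF x(1) x(1)] .
  hence "fps_nth (H x x) k = (-1)^k * fps_nth (H x x) k" by (metis fps_reflect_nth)
  hence "(-1::complex)^k = 1" using k(3) by simp
  hence "even k" by (metis neg_one_odd_power one_neq_neg_one)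
  then obtain p where "k = 2*p" by blast
  moreover have "f = of_nat p" using k(1) \<open>k = 2*p\<close> by (simp add: field_simps)
  ultimately show ?thesis using k by (intro exI[of _ p]) auto
qed

lemma H_eigenvectors:
  assumes x: "x \<in> C" "aa x = sm (fps_const (of_nat p) * fps_X) x"
    and y: "y \<in> C" "aa y = sm (fps_const (of_nat q) * fps_X) y"
  shows "H x y = fps_const (fps_nth (H x y) (p+q)) * fps_X^(p+q)"
proof -
  have "fps_X^2 * fps_deriv (H x y) = H (aa x) y - H x (aa y)" using H_a_right[OF x(1) y(1)] by simp
  also have "\<dots> = fps_const (of_nat (p+q)) * fps_X * H x y" using x y by (simp add: H_smul_left H_smul_right algebra_simps flip: fps_const_add)
  finally show ?thesis by (rule X2_deriv_eq_of_nat)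
qed

lemma eigenvector_X_power:
  assumes x: "x \<in> C" "aa x = sm (fps_const (of_nat p) * fps_X) x"
  shows "aa (sm (fps_X^k) x) = sm (fps_const (of_nat (p + k)) * fps_X) (sm (fps_X^k) x)"
proof -
  have "aa (sm (fps_X^k) x) = pl (sm (fps_X^k * (fps_const (of_nat p) * fps_X)) x) (sm (of_nat k * fps_X * fps_X^k) x)"
    using a_smul[OF x(1), of "fps_X^k"] x by (simp add: X2_deriv_X_power)
  also have "\<dots> = sm (fps_X^k * (fps_const (of_nat p) * fps_X) + of_nat k * fps_X * fps_X^k) x"
    using x by (simp add: sm_add_left)
  also have "fps_X^k * (fps_const (of_nat p) * fps_X) + of_nat k * fps_X * fps_X^k
      = fps_const (of_nat (p + k)) * fps_X * (fps_X^k :: complex fps)"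
    by (simp add: algebra_simps fps_of_nat flip: fps_const_add)
  finally show ?thesis using x by (simp add: mult_ac)
qed

text \<open>With \<open>q = p + k\<close>, both \<open>b\<^sup>k x\<close> and \<open>y\<close> are eigenvectors with parameter \<open>q\<close>, and \<open>H\<close> on their
  span is \<open>b\<^sup>2\<^sup>q\<close> times a binary quadratic form over \<open>\<complex>\<close>; a root \<open>t\<close> of it gives the isotropic
  vector \<open>b\<^sup>k x + t y\<close>.\<close>

lemma isotropic_combination:
  assumes x: "x \<in> C" "aa x = sm (fps_const (of_nat p) * fps_X) x"
    and y: "y \<in> C" "aa y = sm (fps_const (of_nat (p+k)) * fps_X) y"
    and hx: "H x x = fps_const \<alpha> * fps_X^(2*p)" "\<alpha> \<noteq> 0"
    and hy: "H y y = fps_const \<beta> * fps_X^(2*(p+k))" "\<beta> \<noteq> 0"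
    and nonzero: "\<And>t. t \<noteq> 0 \<Longrightarrow> pl (sm (fps_X^k) x) (sm (fps_const t) y) \<noteq> z0"
  shows "\<exists>z\<in>C. z \<noteq> z0 \<and> H z z = 0 \<and> (\<exists>\<mu>. aa z = sm (fps_const \<mu> * fps_X) z)"
proof -
  define \<gamma> where "\<gamma> = fps_nth (H x y) (p + (p+k))"
  have hxy: "H x y = fps_const \<gamma> * fps_X^(p + (p+k))" unfolding \<gamma>_def by (rule H_eigenvectors[OF x y])
  have hyx: "H y x = fps_const \<gamma> * fps_const ((-1)^(p + (p+k))) * fps_X^(p + (p+k))"
    using H_sym[OF x(1) y(1)] hxy by (simp add: fps_neg_X_power)
  define \<sigma> where "\<sigma> = ((-1::complex)^k)"
  obtain t where t: "\<beta> * t * t + 2 * \<gamma> * t + \<sigma> * \<alpha> = 0" using quadratic_root_exists hy(2) by blast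
  have tnz: "t \<noteq> 0" using t hx(2) by (auto simp: \<sigma>_def)
  define z where "z = pl (sm (fps_X^k) x) (sm (fps_const t) y)"
  have zC: "z \<in> C" unfolding z_def using x y by simp
  have znz: "z \<noteq> z0" unfolding z_def using nonzero tnz by blast
  have sign_cancel: "(-1::complex)^k * (-1)^(p + (p+k)) = 1"
  proof -
    have "(-1::complex)^k * (-1)^(p + (p+k)) = (-1)^(2*(p+k))" by (simp flip: power_add) (simp add: algebra_simps)
    also have "\<dots> = 1" by (simp add: power_mult)
    finally show ?thesis .
  qed
  let ?P = "fps_X^(2*(p+k)) :: complex fps"
  have gram_xx: "H (sm (fps_X^k) x) (sm (fps_X^k) x) = fps_const (\<sigma> * \<alpha>) * ?P"
    using x y hx by (simp add: H_smul_left H_smul_right fps_neg_X_power \<sigma>_def power_add mult_2_right mult_ac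
      flip: fps_const_mult)
  have gram_xy: "H (sm (fps_X^k) x) (sm (fps_const t) y) = fps_const (t * \<gamma>) * ?P"
    using x y hxy by (simp add: H_smul_left H_smul_right power_add mult_2 mult_2_right mult_ac)
  have gram_yx: "H (sm (fps_const t) y) (sm (fps_X^k) x) = fps_const (t * \<gamma> * ((-1)^k * (-1)^(p + (p+k)))) * ?P"
    using x y hyx by (simp add: H_smul_left H_smul_right fps_neg_X_power power_add mult_2 mult_2_right mult_ac)
  have gram_yy: "H (sm (fps_const t) y) (sm (fps_const t) y) = fps_const (t * t * \<beta>) * ?P"
    using x y hy by (simp add: H_smul_left H_smul_right mult_ac)
  have "H z z = H (sm (fps_X^k) x) (sm (fps_X^k) x) + H (sm (fps_X^k) x) (sm (fps_const t) y)
     + H (sm (fps_const t) y) (sm (fps_X^k) x) + H (sm (fps_const t) y) (sm (fps_const t) y)"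
    unfolding z_def using x y by (simp add: H_add_left H_add_right)
  also have "\<dots> = fps_const (\<sigma> * \<alpha> + t * \<gamma> + t * \<gamma> + t * t * \<beta>) * ?P"
    unfolding gram_xx gram_xy gram_yx gram_yy sign_cancel by (simp only: mult_1_right fps_const_add[symmetric] distrib_right)
  also have "\<sigma> * \<alpha> + t * \<gamma> + t * \<gamma> + t * t * \<beta> = 0" using t by (simp add: algebra_simps)
  finally have isotropic: "H z z = 0" by simp
  have "aa z = sm (fps_const (of_nat (p+k)) * fps_X) z"
    unfolding z_def using x y eigenvector_X_power[OF x, of k] a_const[OF y(1), of t]
    by (simp add: a_add sm_add_right mult_ac)
  thus ?thesis using zC znz isotropic by blast
qed

text \<open>A relation \<open>b\<^sup>k x = -t y\<close> gives \<open>F = G\<close> if \<open>k = 0\<close>; if \<open>k > 0\<close>, saturation of \<open>G\<close> makes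
  \<open>y\<close> divisible by \<open>b\<close> inside \<open>G = C[[b]] y\<close>, which torsion freeness forbids.\<close>

lemma combination_nonzero:
  assumes x: "x \<in> C" "F = {sm s x | s. True}" and y: "y \<in> C" "y \<noteq> z0" "G = {sm s y | s. True}"
    and G: "normal_sub E G" and FG: "F \<noteq> G" and t: "t \<noteq> 0"
  shows "pl (sm (fps_X^k) x) (sm (fps_const t) y) \<noteq> z0"
proof
  assume "pl (sm (fps_X^k) x) (sm (fps_const t) y) = z0"
  hence "sm (fps_const t) y = sm (-1) (sm (fps_X^k) x)" using x y by (intro add_eq_zero_imp_neg) auto
  hence "sm (fps_const (inverse t)) (sm (fps_const t) y) = sm (fps_const (- inverse t) * fps_X^k) x"
    using x by (simp flip: fps_const_neg)
  moreover have "fps_const (inverse t) * fps_const t = 1" using t by simp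
  ultimately have yx: "y = sm (fps_const (- inverse t) * fps_X^k) x" using y by simp
  interpret quotient: ab_quot E G using G by unfold_locales (simp add: normal_sub_def)
  show False
  proof (cases k)
    case 0
    have yx0: "y = sm (fps_const (- inverse t)) x" using yx 0 by simp
    have "fps_const (- t) * fps_const (- inverse t) = 1" using t by simp
    hence xy: "x = sm (fps_const (- t)) y" using yx0 x by simp
    have "F = G"
    proof
      show "F \<subseteq> G" unfolding x(2) y(3) using xy y by (auto intro: exI[of _ "_ * fps_const (- t)"])
      show "G \<subseteq> F" unfolding x(2) y(3) using yx0 x by (auto intro: exI[of _ "_ * fps_const (- inverse t)"])
    qed
    thus False using FG by simp
  next
    case (Suc j)
    define u where "u = sm (fps_const (- inverse t) * fps_X^j) x"
    have uC: "u \<in> C" and yu: "y = sm fps_X u" unfolding u_def using yx Suc x by (simp_all add: mult_ac)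
    have "y \<in> G" using y by (auto intro: exI[of _ 1])
    hence "u \<in> G" using quotient.normal_sub_saturated[OF G uC, of fps_X] yu by simp
    then obtain s where us: "u = sm s y" using y by blast
    have "y = sm fps_X u" by (rule yu)
    also have "\<dots> = sm (fps_X * s) y" using us y(1) by simp
    finally have yy: "y = sm (fps_X * s) y" .
    have "sm (1 - fps_X * s) y = pl (sm 1 y) (sm (- (fps_X * s)) y)"
      using sm_add_left[OF y(1), of 1 "- (fps_X * s)"] by simp
    also have "\<dots> = pl y (sm (-1) (sm (fps_X * s) y))" using y(1) by simp
    also have "\<dots> = pl y (sm (-1) y)" by (simp only: yy[symmetric])
    finally have "sm (1 - fps_X * s) y = z0" using y(1) by simp
    moreover have "fps_nth (1 - fps_X * s) 0 \<noteq> fps_nth 0 0" by simp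
    hence "1 - fps_X * s \<noteq> 0" by metis
    ultimately show False using torsion_free y by blast
  qed
qed

lemma exists_isotropic_eigenvector:
  assumes x: "x \<in> C" "x \<noteq> z0" "F = {sm s x | s. True}" "aa x = sm (fps_const f * fps_X) x"
    and y: "y \<in> C" "y \<noteq> z0" "G = {sm s y | s. True}" "aa y = sm (fps_const g * fps_X) y"
    and nF: "normal_sub E F" and nG: "normal_sub E G" and FG: "F \<noteq> G"
  shows "\<exists>z\<in>C. z \<noteq> z0 \<and> H z z = 0 \<and> (\<exists>\<mu>. aa z = sm (fps_const \<mu> * fps_X) z)"
proof (cases "H x x = 0 \<or> H y y = 0")
  case True thus ?thesis using x y by blast
next
  case False
  obtain p where p: "f = of_nat p" "H x x = fps_const (fps_nth (H x x) (2*p)) * fps_X^(2*p)"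
    "fps_nth (H x x) (2*p) \<noteq> 0" using anisotropic_eigenvector_norm[OF x(1,4)] False by blast
  obtain q where q: "g = of_nat q" "H y y = fps_const (fps_nth (H y y) (2*q)) * fps_X^(2*q)"
    "fps_nth (H y y) (2*q) \<noteq> 0" using anisotropic_eigenvector_norm[OF y(1,4)] False by blast
  show ?thesis
  proof (cases "p \<le> q")
    case True
    then obtain k where k: "q = p + k" using le_Suc_ex by blast
    show ?thesis
      by (rule isotropic_combination[of x p y k "fps_nth (H x x) (2*p)" "fps_nth (H y y) (2*q)"])
         (use x y p q k combination_nonzero[OF x(1,3) y(1-3) nG FG] in auto)
  next
    case False
    then obtain k where k: "p = q + k" using le_Suc_ex[of q p] by auto
    show ?thesis
      by (rule isotropic_combination[of y q x k "fps_nth (H y y) (2*q)" "fps_nth (H x x) (2*p)"])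
         (use x y p q k combination_nonzero[OF y(1,3) x(1-3) nF FG[symmetric]] in auto)
  qed
qed

text \<open>Dividing \<open>H(\<cdot>, z)\<close> by its \<open>b\<close>-adic content: the quotient is again represented by \<open>H\<close>,
  now by a vector pairing to a unit with some \<open>y\<^sub>1\<close>.\<close>

lemma exists_primitive_divisor:
  assumes z: "z \<in> C" "z \<noteq> z0"
  shows "\<exists>w\<in>C. \<exists>m. \<exists>y1\<in>C. (\<forall>u\<in>C. H u z = H u w * fps_X^m) \<and> fps_nth (H w y1) 0 \<noteq> 0"
proof -
  have "\<exists>u\<in>C. H z u \<noteq> 0"
  proof (rule ccontr)
    assume "\<not> ?thesis"
    hence "\<And>u. u \<in> C \<Longrightarrow> H u z = H u z0" using H_sym[OF z(1)] z(1) by simp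
    thus False using eq_if_H_right_eq z by simp
  qed
  hence ex: "\<exists>m. \<exists>y\<in>C. H z y \<noteq> 0 \<and> subdegree (H z y) = m" by blast
  define m where "m = (LEAST m. \<exists>y\<in>C. H z y \<noteq> 0 \<and> subdegree (H z y) = m)"
  obtain y1 where y1: "y1 \<in> C" "H z y1 \<noteq> 0" "subdegree (H z y1) = m"
    using LeastI_ex[OF ex] unfolding m_def by blast
  have m_le: "m \<le> subdegree (H u z)" if "u \<in> C" "H u z \<noteq> 0" for u
    using H_sym[OF z(1) that(1)] that unfolding m_def by (auto intro: Least_le)
  have div: "H u z = fps_shift m (H u z) * fps_X^m" if "u \<in> C" for u
    using m_le[OF that] by (cases "H u z = 0") (simp_all add: fps_shift_times_fps_X_power)
  have "\<exists>w\<in>C. \<forall>u\<in>C. fps_shift m (H u z) = H u w"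
  proof (rule functional_represented)
    fix x y assume "x \<in> C" "y \<in> C"
    thus "fps_shift m (H (pl x y) z) = fps_shift m (H x z) + fps_shift m (H y z)"
      using z(1) by (simp add: H_add_left fps_shift_add)
  next
    fix s x assume x: "x \<in> C"
    show "fps_shift m (H (sm s x) z) = s * fps_shift m (H x z)"
      using x z(1) m_le[OF x] by (cases "H x z = 0") (simp_all add: H_smul_left fps_shift_mult)
  qed
  then obtain w where w: "w \<in> C" "\<And>u. u \<in> C \<Longrightarrow> H u z = H u w * fps_X^m"
    using div by metis
  have "H z y1 = fps_reflect (H y1 w) * (- fps_X)^m"
    using H_sym[OF y1(1) z(1)] w(2)[OF y1(1)] by simp
  also have "fps_reflect (H y1 w) = H w y1" using H_sym[OF y1(1) w(1)] by simp
  finally have zy1: "H z y1 = H w y1 * (- fps_X)^m" .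
  hence "H w y1 \<noteq> 0" using y1(2) by auto
  moreover have "subdegree (H w y1) = 0"
    using y1(3) \<open>H w y1 \<noteq> 0\<close> unfolding zy1 by (simp add: fps_neg_X_power_nonzero subdegree_fps_neg_X_power)
  ultimately have "fps_nth (H w y1) 0 \<noteq> 0" by (metis nth_subdegree_nonzero)
  thus ?thesis using w y1(1) by blast
qed

lemma eigenvector_of_divisor:
  assumes z: "z \<in> C" "aa z = sm (fps_const \<mu> * fps_X) z"
    and w: "w \<in> C" "\<And>u. u \<in> C \<Longrightarrow> H u z = H u w * fps_X^m"
  shows "aa w = sm (fps_const (\<mu> - of_nat m) * fps_X) w"
proof (rule eq_if_H_right_eq)
  show "aa w \<in> C" "sm (fps_const (\<mu> - of_nat m) * fps_X) w \<in> C" using w by auto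
  fix u assume u: "u \<in> C"
  let ?P = "fps_X^m :: complex fps"
  define A B where "A = H (aa u) w" and "B = H u w"
  have "H u (aa z) = H (aa u) z - fps_X^2 * fps_deriv (H u z)" using H_a_right u z(1) by simp
  also have "\<dots> = A * ?P - fps_X^2 * fps_deriv (B * ?P)" unfolding A_def B_def using w(2) u by simp
  also have "\<dots> = (A - fps_X^2 * fps_deriv B - of_nat m * fps_X * B) * ?P"
    unfolding X2_deriv_mult[of B ?P] X2_deriv_X_power by (simp add: algebra_simps)
  finally have "(A - fps_X^2 * fps_deriv B - of_nat m * fps_X * B) * ?P = - (fps_const \<mu> * fps_X) * B * ?P"
    using z u w(2)[OF u] unfolding B_def by (simp add: H_smul_right mult.assoc)
  hence "(A - fps_X^2 * fps_deriv B - of_nat m * fps_X * B + fps_const \<mu> * fps_X * B) * ?P = 0"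
    by (simp add: algebra_simps)
  hence cancelled: "A - fps_X^2 * fps_deriv B - of_nat m * fps_X * B + fps_const \<mu> * fps_X * B = 0"
    by simp
  have "A - fps_X^2 * fps_deriv B = (A - fps_X^2 * fps_deriv B - of_nat m * fps_X * B + fps_const \<mu> * fps_X * B)
      + (of_nat m * fps_X * B - fps_const \<mu> * fps_X * B)" by (simp add: algebra_simps)
  hence "A - fps_X^2 * fps_deriv B = of_nat m * fps_X * B - fps_const \<mu> * fps_X * B"
    unfolding cancelled by simp
  moreover have "H u (aa w) = A - fps_X^2 * fps_deriv B" unfolding A_def B_def using H_a_right u w(1) by simp
  moreover have "H u (sm (fps_const (\<mu> - of_nat m) * fps_X) w) = of_nat m * fps_X * B - fps_const \<mu> * fps_X * B"
    unfolding B_def using u w(1) by (simp add: H_smul_right algebra_simps fps_of_nat flip: fps_const_sub)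
  ultimately show "H u (aa w) = H u (sm (fps_const (\<mu> - of_nat m) * fps_X) w)" by simp
qed

lemma exists_isotropic_unimodular:
  assumes z: "z \<in> C" "z \<noteq> z0" "H z z = 0" "aa z = sm (fps_const \<mu> * fps_X) z"
  shows "\<exists>w\<in>C. \<exists>y0\<in>C. H w w = 0 \<and> H w y0 = 1 \<and> (\<exists>c. aa w = sm c w)"
proof -
  obtain w m y1 where w: "w \<in> C" "\<And>u. u \<in> C \<Longrightarrow> H u z = H u w * fps_X^m"
    and y1: "y1 \<in> C" "fps_nth (H w y1) 0 \<noteq> 0"
    using exists_primitive_divisor[OF z(1,2)] by blast
  have "0 = fps_reflect (H w z) * fps_X^m" using w(2)[OF z(1)] z(3) H_sym[OF w(1) z(1)] by simp
  also have "fps_reflect (H w z) = fps_reflect (H w w) * (- fps_X)^m" using w(2)[OF w(1)] by simp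
  finally have Hww: "H w w = 0" by (simp add: fps_neg_X_power_nonzero)
  define y0 where "y0 = sm (fps_reflect (inverse (H w y1))) y1"
  have "H w y0 = 1" unfolding y0_def using w(1) y1 by (simp add: H_smul_right inverse_mult_eq_1)
  moreover have "y0 \<in> C" unfolding y0_def using y1 by simp
  ultimately show ?thesis using w Hww eigenvector_of_divisor[OF z(1,4) w] by blast
qed

end

section \<open>The isotropic flag\<close>

lemma (in ab_premod) line_basis:
  assumes v: "v \<in> C" and inj: "\<And>s t. sm s v = sm t v \<Longrightarrow> s = t"
  shows "is_basis (restr M {sm s v | s. True}) [v]"
  unfolding is_basis_def
proof (intro conjI ballI)
  show "set [v] \<subseteq> ab_carr (restr M {sm s v | s. True})" using v by (auto intro: exI[of _ 1])
  fix x assume "x \<in> ab_carr (restr M {sm s v | s. True})"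
  then obtain s where s: "x = sm s v" by auto
  show "\<exists>!cs. length cs = length [v] \<and> lincomb (restr M {sm s v | s. True}) cs [v] = x"
  proof (rule ex1I[of _ "[s]"])
    show "length [s] = length [v] \<and> lincomb (restr M {sm s v | s. True}) [s] [v] = x" using s v by simp
    fix d assume d: "length d = length [v] \<and> lincomb (restr M {sm s v | s. True}) d [v] = x"
    then obtain d0 where "d = [d0]" by (cases d) auto
    thus "d = [s]" using d s v inj by simp
  qed
qed

text \<open>An isotropic eigenvector \<open>w\<close> together with a dual vector \<open>y\<^sub>0\<close> determines the flag
  \<open>F\<^sub>1 = C[[b]] w \<subseteq> F\<^sub>n\<^sub>-\<^sub>1 = w\<^sup>\<bottom>\<close>; \<open>E = F\<^sub>n\<^sub>-\<^sub>1 \<oplus> C[[b]] y\<^sub>0\<close> and \<open>E = F\<^sub>1 \<oplus> y\<^sub>0\<^sup>\<bottom>\<close>.\<close>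

locale isotropic_flag = herm_mod E H for E :: "'v abmod" and H +
  fixes w y0 c
  assumes w_mem: "w \<in> C" and y0_mem: "y0 \<in> C" and H_w_w: "H w w = 0" and H_w_y0: "H w y0 = 1"
    and a_w: "aa w = sm c w"
begin

definition F1 :: "'v set" where "F1 = {sm s w | s. True}"
definition Fn1 :: "'v set" where "Fn1 = {v\<in>C. H v w = 0}"

lemma H_y0_w: "H y0 w = 1" using H_sym[OF w_mem y0_mem] H_w_y0 by simp

lemma F1_iff: "u \<in> F1 \<longleftrightarrow> (\<exists>s. u = sm s w)" unfolding F1_def by blast

lemma F1_subset: "F1 \<subseteq> C" unfolding F1_def using w_mem by auto
lemma Fn1_subset: "Fn1 \<subseteq> C" unfolding Fn1_def by auto

lemma sub_F1: "is_sub E F1"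
  unfolding is_sub_def
proof (intro conjI ballI allI)
  show "F1 \<subseteq> C" by (rule F1_subset)
  show "z0 \<in> F1" unfolding F1_iff using w_mem by (intro exI[of _ 0]) simp
next
  fix x y assume "x \<in> F1" "y \<in> F1"
  then obtain s t where "x = sm s w" "y = sm t w" unfolding F1_iff by blast
  thus "pl x y \<in> F1" unfolding F1_iff using w_mem by (intro exI[of _ "s + t"]) (simp add: sm_add_left)
next
  fix s x assume "x \<in> F1"
  then obtain t where "x = sm t w" unfolding F1_iff by blast
  thus "sm s x \<in> F1" unfolding F1_iff using w_mem by (intro exI[of _ "s * t"]) simp
next
  fix x assume "x \<in> F1"
  then obtain t where "x = sm t w" unfolding F1_iff by blast
  thus "aa x \<in> F1" unfolding F1_iff using w_mem a_smul[OF w_mem, of t] a_w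
    by (intro exI[of _ "t * c + fps_X^2 * fps_deriv t"]) (simp add: sm_add_left)
qed

lemma sub_Fn1: "is_sub E Fn1"
  unfolding is_sub_def
proof (intro conjI ballI allI)
  show "Fn1 \<subseteq> C" by (rule Fn1_subset)
  show "z0 \<in> Fn1" unfolding Fn1_def using w_mem by simp
next
  fix x y assume "x \<in> Fn1" "y \<in> Fn1"
  thus "pl x y \<in> Fn1" unfolding Fn1_def using w_mem by (simp add: H_add_left)
next
  fix s x assume "x \<in> Fn1"
  thus "sm s x \<in> Fn1" unfolding Fn1_def using w_mem by (simp add: H_smul_left)
next
  fix x assume x: "x \<in> Fn1"
  have "H x (aa w) = H (aa x) w - fps_X^2 * fps_deriv (H x w)" using H_a_right x w_mem Fn1_subset by auto
  moreover have "H x (aa w) = 0" using x a_w w_mem Fn1_subset by (auto simp: H_smul_right Fn1_def)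
  ultimately show "aa x \<in> Fn1" using x unfolding Fn1_def by simp
qed

lemma F1_subset_Fn1: "F1 \<subseteq> Fn1"
  unfolding F1_def Fn1_def using w_mem by (auto simp: H_smul_left H_w_w)

lemma H_Fn1_F1: "v \<in> Fn1 \<Longrightarrow> u \<in> F1 \<Longrightarrow> H v u = 0"
  using w_mem Fn1_subset unfolding F1_iff Fn1_def by (auto simp: H_smul_right)

lemma H_F1_Fn1: "u \<in> F1 \<Longrightarrow> v \<in> Fn1 \<Longrightarrow> H u v = 0"
proof -
  assume u: "u \<in> F1" and v: "v \<in> Fn1"
  have "H u v = fps_reflect (H v u)" using H_sym F1_subset Fn1_subset u v by (meson subsetD)
  thus ?thesis using H_Fn1_F1[OF v u] by simp
qed

lemma smul_w_inj: "sm s w = sm t w \<Longrightarrow> s = t"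
proof -
  assume "sm s w = sm t w"
  hence "H (sm s w) y0 = H (sm t w) y0" by simp
  thus "s = t" using w_mem y0_mem by (simp add: H_smul_left H_w_y0)
qed

lemma smul_y0_inj: "sm s y0 = sm t y0 \<Longrightarrow> s = t"
proof -
  assume "sm s y0 = sm t y0"
  hence "H (sm s y0) w = H (sm t y0) w" by simp
  thus "s = t" using w_mem y0_mem by (simp add: H_smul_left H_y0_w)
qed

lemma rank_F1: "has_rank (restr E F1) 1"
  using line_basis[OF w_mem smul_w_inj] unfolding has_rank_def F1_def by (intro exI[of _ "[w]"]) simp

lemma rank_Fn1: assumes "has_rank E n" shows "has_rank (restr E Fn1) (n - 1)"
proof -
  obtain es where es: "is_basis E es" "length es = n" using assms unfolding has_rank_def by blast
  have "has_rank (restr E {v\<in>C. H v w = 0}) (length es - 1)"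
    by (rule kernel_has_rank[OF es(1), of "\<lambda>v. H v w" y0]) (use w_mem y0_mem H_y0_w in \<open>auto simp: H_add_left H_smul_left\<close>)
  thus ?thesis using es unfolding Fn1_def by simp
qed

interpretation E_F1: ab_quot E F1 by unfold_locales (rule sub_F1)
interpretation E_Fn1: ab_quot E Fn1 by unfold_locales (rule sub_Fn1)

definition proj :: "'v \<Rightarrow> 'v" where
  "proj u = pl u (sm (- H u w) y0)"

lemma proj_mem_Fn1: "u \<in> C \<Longrightarrow> proj u \<in> Fn1"
  unfolding Fn1_def proj_def using w_mem y0_mem by (simp add: H_add_left H_smul_left H_y0_w)

lemma coset_Fn1_eq: assumes "v \<in> C" shows "E_Fn1.cs v = E_Fn1.cs (sm (H v w) y0)"
  using E_Fn1.coset_eq_iff[of v "sm (H v w) y0"] proj_mem_Fn1[OF assms] assms y0_mem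
  by (simp add: proj_def)

lemma normal_Fn1: "normal_sub E Fn1"
proof -
  define K where "K = {sm s y0 | s. True}"
  have "is_basis (restr E K) [y0]" unfolding K_def by (rule line_basis[OF y0_mem smul_y0_inj])
  hence "is_basis (quot E Fn1) (map E_Fn1.cs [y0])"
  proof (rule E_Fn1.quot_basis_complement[rotated])
    show "K \<subseteq> C" "z0 \<in> K" unfolding K_def using y0_mem by (auto intro: exI[of _ 0])
    show "\<forall>x\<in>K. \<forall>y\<in>K. pl x y \<in> K" "\<forall>s. \<forall>x\<in>K. sm s x \<in> K" unfolding K_def using y0_mem
      by (auto simp: sm_add_left[symmetric] intro: exI)
    show "\<forall>v\<in>C. \<exists>k\<in>K. E_Fn1.cs v = E_Fn1.cs k" unfolding K_def using coset_Fn1_eq by blast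
    show "\<forall>k\<in>K. k \<in> Fn1 \<longrightarrow> k = z0"
      unfolding K_def Fn1_def using y0_mem w_mem by (auto simp: H_smul_left H_y0_w)
  qed
  thus ?thesis unfolding normal_sub_def has_rank_def using sub_Fn1 by (intro conjI exI) auto
qed

lemma normal_F1: assumes "has_rank E n" shows "normal_sub E F1"
proof -
  obtain es where es: "is_basis E es" "length es = n" using assms unfolding has_rank_def by blast
  define K where "K = {v\<in>C. H v y0 = 0}"
  have "has_rank (restr E K) (length es - 1)" unfolding K_def
    by (rule kernel_has_rank[OF es(1), of "\<lambda>v. H v y0" w]) (use w_mem y0_mem H_w_y0 in \<open>auto simp: H_add_left H_smul_left\<close>)
  then obtain ks where Kb: "is_basis (restr E K) ks" unfolding has_rank_def by blast
  have "is_basis (quot E F1) (map E_F1.cs ks)"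
  proof (rule E_F1.quot_basis_complement[OF _ Kb])
    show "K \<subseteq> C" unfolding K_def by auto
    show "z0 \<in> K" unfolding K_def using y0_mem by simp
    show "\<forall>x\<in>K. \<forall>y\<in>K. pl x y \<in> K" unfolding K_def using y0_mem by (auto simp: H_add_left)
    show "\<forall>s. \<forall>x\<in>K. sm s x \<in> K" unfolding K_def using y0_mem by (auto simp: H_smul_left)
    show "\<forall>v\<in>C. \<exists>k\<in>K. E_F1.cs v = E_F1.cs k"
    proof
      fix v assume v: "v \<in> C"
      define k where "k = pl v (sm (- H v y0) w)"
      have kK: "k \<in> K" unfolding k_def K_def using v y0_mem w_mem by (simp add: H_add_left H_smul_left H_w_y0)
      have "pl v (sm (-1) k) = sm (H v y0) w"
      proof (rule eq_if_H_right_eq)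
        show "pl v (sm (-1) k) \<in> C" "sm (H v y0) w \<in> C" unfolding k_def using v w_mem by auto
        fix u assume u: "u \<in> C"
        show "H u (pl v (sm (-1) k)) = H u (sm (H v y0) w)"
          unfolding k_def using u v w_mem by (simp add: H_add_right H_smul_right algebra_simps)
      qed
      hence "E_F1.cs v = E_F1.cs k" using v kK K_def E_F1.coset_eq_iff[of v k] by (auto simp: F1_iff)
      thus "\<exists>k\<in>K. E_F1.cs v = E_F1.cs k" using kK by blast
    qed
    show "\<forall>k\<in>K. k \<in> F1 \<longrightarrow> k = z0"
      unfolding K_def F1_iff using y0_mem w_mem by (auto simp: H_smul_left H_w_y0)
  qed
  thus ?thesis unfolding normal_sub_def has_rank_def using sub_F1 by (intro conjI exI) auto
qed

text \<open>The isomorphism \<open>F\<^sub>1 \<cong> (E/F\<^sub>n\<^sub>-\<^sub>1)\<^sup>\<or>\<close>: \<open>u \<mapsto> H(\<cdot>, u)\<close>, well defined on cosets since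
  \<open>F\<^sub>n\<^sub>-\<^sub>1 \<perp> F\<^sub>1\<close>.\<close>

definition pairing :: "'v \<Rightarrow> 'v set \<Rightarrow> complex fps" where
  "pairing u X = (if X \<in> ab_carr (quot E Fn1) then H (SOME x. x \<in> X) u else 0)"

lemma pairing_coset: assumes v: "v \<in> C" and u: "u \<in> F1" shows "pairing u (E_Fn1.cs v) = H v u"
proof -
  obtain f where f: "f \<in> Fn1" "(SOME x. x \<in> E_Fn1.cs v) = pl v f" using E_Fn1.coset_rep[OF v] by blast
  have "H (pl v f) u = H v u"
    using H_add_left[OF v, of f u] H_Fn1_F1[OF f(1) u] f(1) u Fn1_subset F1_subset by auto
  thus ?thesis unfolding pairing_def using f v by (simp add: E_Fn1.quot_carr)
qed

lemma pairing_outside: "X \<notin> ab_carr (quot E Fn1) \<Longrightarrow> pairing u X = 0"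
  unfolding pairing_def by simp

lemma pairing_mem_dual: assumes u: "u \<in> F1" shows "pairing u \<in> ab_carr (dual (quot E Fn1))"
  unfolding dual_carr
proof (intro conjI ballI allI impI)
  fix X Y assume "X \<in> ab_carr (quot E Fn1)" "Y \<in> ab_carr (quot E Fn1)"
  then obtain v v' where "v \<in> C" "v' \<in> C" "X = E_Fn1.cs v" "Y = E_Fn1.cs v'" by (auto simp: E_Fn1.quot_carr)
  thus "pairing u (ab_add (quot E Fn1) X Y) = pairing u X + pairing u Y"
    using u F1_subset by (auto simp: E_Fn1.quot_add pairing_coset H_add_left)
next
  fix s X assume "X \<in> ab_carr (quot E Fn1)"
  then obtain v where "v \<in> C" "X = E_Fn1.cs v" by (auto simp: E_Fn1.quot_carr)
  thus "pairing u (ab_smul (quot E Fn1) s X) = s * pairing u X"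
    using u F1_subset by (auto simp: E_Fn1.quot_smul pairing_coset H_smul_left)
qed (rule pairing_outside)

lemma ab_hom_pairing: "ab_hom (restr E F1) (adjoint (quot E Fn1)) pairing"
proof (rule ab_hom_adjointI)
  fix X assume "X \<in> ab_carr (quot E Fn1)"
  then obtain v where v: "v \<in> C" "X = E_Fn1.cs v" by (auto simp: E_Fn1.quot_carr)
  fix u u' assume "u \<in> ab_carr (restr E F1)" "u' \<in> ab_carr (restr E F1)"
  hence u: "u \<in> F1" "u' \<in> F1" "u \<in> C" "u' \<in> C" using F1_subset by auto
  show "pairing (ab_add (restr E F1) u u') X = pairing u X + pairing u' X"
    using u v E_F1.F_add by (simp add: pairing_coset H_add_right)
  show "pairing (ab_smul (restr E F1) s u) X = fps_reflect s * pairing u X" for s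
    using u v E_F1.F_sm by (simp add: pairing_coset H_smul_right)
  show "pairing (ab_a (restr E F1) u) X = pairing u (ab_a (quot E Fn1) X) - fps_X^2 * fps_deriv (pairing u X)"
    using u v E_F1.F_a by (simp add: pairing_coset E_Fn1.quot_a H_a_right)
qed (auto simp: pairing_mem_dual pairing_outside)

lemma inj_on_pairing: "inj_on pairing F1"
proof
  fix u u' assume u: "u \<in> F1" "u' \<in> F1" and eq: "pairing u = pairing u'"
  obtain s s' where s: "u = sm s w" "u' = sm s' w" using u F1_iff by blast
  have "H y0 u = H y0 u'" using fun_cong[OF eq, of "E_Fn1.cs y0"] pairing_coset y0_mem u by simp
  hence "fps_reflect s = fps_reflect s'" using s y0_mem w_mem by (simp add: H_smul_right H_y0_w)
  thus "u = u'" using s by (simp add: fps_reflect_eq_iff)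
qed

lemma pairing_image: "pairing ` F1 = ab_carr (adjoint (quot E Fn1))"
proof
  show "pairing ` F1 \<subseteq> ab_carr (adjoint (quot E Fn1))" using pairing_mem_dual by auto
next
  show "ab_carr (adjoint (quot E Fn1)) \<subseteq> pairing ` F1"
  proof
    fix \<phi> assume "\<phi> \<in> ab_carr (adjoint (quot E Fn1))"
    hence \<phi>sm: "\<And>s X. X \<in> ab_carr (quot E Fn1) \<Longrightarrow> \<phi> (ab_smul (quot E Fn1) s X) = s * \<phi> X"
      and \<phi>out: "\<And>X. X \<notin> ab_carr (quot E Fn1) \<Longrightarrow> \<phi> X = 0" unfolding adjoint_simps dual_carr by auto
    define u where "u = sm (fps_reflect (\<phi> (E_Fn1.cs y0))) w"
    have uF: "u \<in> F1" unfolding u_def F1_iff by blast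
    have "pairing u X = \<phi> X" for X
    proof (cases "X \<in> ab_carr (quot E Fn1)")
      case True
      then obtain v where v: "v \<in> C" "X = E_Fn1.cs v" by (auto simp: E_Fn1.quot_carr)
      have "X = E_Fn1.cs (sm (H v w) y0)" by (simp only: v(2) coset_Fn1_eq[OF v(1)])
      also have "\<dots> = ab_smul (quot E Fn1) (H v w) (E_Fn1.cs y0)" using y0_mem by (simp add: E_Fn1.quot_smul)
      finally have "X = ab_smul (quot E Fn1) (H v w) (E_Fn1.cs y0)" .
      hence "\<phi> X = H v w * \<phi> (E_Fn1.cs y0)" using \<phi>sm y0_mem by (simp add: E_Fn1.quot_carr)
      moreover have "pairing u X = \<phi> (E_Fn1.cs y0) * H v w"
        using v uF w_mem by (simp add: pairing_coset u_def H_smul_right)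
      ultimately show ?thesis by (simp add: mult.commute)
    qed (simp add: pairing_outside \<phi>out)
    hence "pairing u = \<phi>" ..
    thus "\<phi> \<in> pairing ` F1" using uF by blast
  qed
qed

lemma adjoint_quot_Fn1_iso: "ab_isomorphic (adjoint (quot E Fn1)) (restr E F1)"
proof -
  have "ab_iso_map (restr E F1) (adjoint (quot E Fn1)) pairing"
    unfolding ab_iso_map_def bij_betw_def using ab_hom_pairing inj_on_pairing pairing_image by simp
  hence "ab_iso_map (adjoint (quot E Fn1)) (restr E F1) (inv_into F1 pairing)"
    using ab_iso_map_inv[of "restr E F1"] sub_F1 unfolding is_sub_def by simp
  thus ?thesis unfolding ab_isomorphic_def by blast
qed

lemma proj_add: "u \<in> C \<Longrightarrow> u' \<in> C \<Longrightarrow> proj (pl u u') = pl (proj u) (proj u')"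
  by (rule eq_if_H_right_eq)
     (use w_mem y0_mem in \<open>auto simp: proj_def H_add_right H_smul_right H_add_left algebra_simps\<close>)

lemma proj_smul: "u \<in> C \<Longrightarrow> proj (sm s u) = sm s (proj u)"
  by (rule eq_if_H_right_eq)
     (use w_mem y0_mem in \<open>auto simp: proj_def H_add_right H_smul_right H_smul_left algebra_simps\<close>)

lemma proj_id: "v \<in> Fn1 \<Longrightarrow> proj v = v"
  unfolding proj_def Fn1_def using y0_mem by simp

lemma mem_F1_if_perp: assumes d: "d \<in> C" and perp: "\<And>v. v \<in> Fn1 \<Longrightarrow> H v d = 0" shows "d \<in> F1"
proof -
  have "d = sm (fps_reflect (H y0 d)) w"
  proof (rule eq_if_H_right_eq)
    show "d \<in> C" "sm (fps_reflect (H y0 d)) w \<in> C" using d w_mem by auto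
    fix u assume u: "u \<in> C"
    have "0 = H (proj u) d" using perp proj_mem_Fn1 u by simp
    also have "\<dots> = H u d - H u w * H y0 d" using u y0_mem d by (simp add: proj_def H_add_left H_smul_left)
    finally show "H u d = H u (sm (fps_reflect (H y0 d)) w)" using u w_mem by (simp add: H_smul_right)
  qed
  thus ?thesis unfolding F1_iff by blast
qed

interpretation Fn1_F1: ab_quot "restr E Fn1" F1
proof unfold_locales
  show "ab_premodule (restr E Fn1)" by (rule sub_premodule[OF sub_Fn1])
  show "is_sub (restr E Fn1) F1" using sub_F1 F1_subset_Fn1 unfolding is_sub_def by auto
qed

lemma quot_Fn1_F1_elem:
  assumes "X \<in> ab_carr (quot (restr E Fn1) F1)" obtains v where "v \<in> Fn1" "X = Fn1_F1.cs v"
  using assms Fn1_F1.quot_carr by auto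

text \<open>The form induced on \<open>F\<^sub>n\<^sub>-\<^sub>1/F\<^sub>1\<close>; it is well defined because \<open>F\<^sub>1\<close> is orthogonal
  to all of \<open>F\<^sub>n\<^sub>-\<^sub>1\<close>.\<close>

definition quot_form :: "'v set \<Rightarrow> 'v set \<Rightarrow> complex fps" where
  "quot_form X Y = H (SOME x. x \<in> X) (SOME y. y \<in> Y)"

lemma quot_form_coset:
  assumes v: "v \<in> Fn1" and y: "y \<in> Fn1" shows "quot_form (Fn1_F1.cs v) (Fn1_F1.cs y) = H v y"
proof -
  obtain f where f: "f \<in> F1" "(SOME x. x \<in> Fn1_F1.cs v) = pl v f" using Fn1_F1.coset_rep[of v] v by auto
  obtain g where g: "g \<in> F1" "(SOME x. x \<in> Fn1_F1.cs y) = pl y g" using Fn1_F1.coset_rep[of y] y by auto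
  have fC: "f \<in> C" "g \<in> C" using f g F1_subset by auto
  have "H (pl v f) (pl y g) = H v y + H v g + (H f y + H f g)"
    using v y fC E_Fn1.F_sub by (simp add: H_add_left H_add_right)
  also have "\<dots> = H v y"
    using H_Fn1_F1[OF v g(1)] H_F1_Fn1[OF f(1) y] H_F1_Fn1[OF f(1)] g(1) F1_subset_Fn1 by auto
  finally show ?thesis unfolding quot_form_def using f g by simp
qed

lemma herm_form_quot_form: "herm_form (quot (restr E Fn1) F1) quot_form"
  unfolding herm_form_def conj_simps E_elem_0_a
proof (intro conjI ballI allI)
  fix V V' W assume "V \<in> ab_carr Fn1_F1.Q" "V' \<in> ab_carr Fn1_F1.Q" "W \<in> ab_carr Fn1_F1.Q"
  then obtain v v' y where "v \<in> Fn1" "v' \<in> Fn1" "y \<in> Fn1" "V = Fn1_F1.cs v" "V' = Fn1_F1.cs v'" "W = Fn1_F1.cs y"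
    by (metis quot_Fn1_F1_elem)
  thus "quot_form (ab_add Fn1_F1.Q V V') W = quot_form V W + quot_form V' W"
    and "quot_form V (ab_add Fn1_F1.Q W V') = quot_form V W + quot_form V V'"
    by (simp_all add: Fn1_F1.quot_add quot_form_coset H_add_left H_add_right E_Fn1.F_sub)
next
  fix V W assume "V \<in> ab_carr Fn1_F1.Q" "W \<in> ab_carr Fn1_F1.Q"
  then obtain v y where vy: "v \<in> Fn1" "y \<in> Fn1" "V = Fn1_F1.cs v" "W = Fn1_F1.cs y"
    by (metis quot_Fn1_F1_elem)
  thus "quot_form (ab_smul Fn1_F1.Q s V) W = s * quot_form V W"
    and "quot_form V (ab_smul Fn1_F1.Q (fps_reflect s) W) = s * quot_form V W" for s
    by (simp_all add: Fn1_F1.quot_smul quot_form_coset H_smul_left H_smul_right E_Fn1.F_sub)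
  have "fps_X^2 * fps_deriv (H v y) = H (aa v) y + H v (sm (-1) (aa y))" using H_a vy E_Fn1.F_sub by simp
  thus "fps_X^2 * fps_deriv (quot_form V W) =
      quot_form (ab_a Fn1_F1.Q V) W + quot_form V (ab_smul Fn1_F1.Q (-1) (ab_a Fn1_F1.Q W))"
    using vy by (simp add: Fn1_F1.quot_smul Fn1_F1.quot_a quot_form_coset)
  show "quot_form W V = fps_reflect (quot_form V W)"
    using vy H_sym[of v y] E_Fn1.F_sub by (simp add: quot_form_coset)
qed

lemma form_map_quot_coset:
  "v \<in> Fn1 \<Longrightarrow> y \<in> Fn1 \<Longrightarrow> form_map Fn1_F1.Q quot_form (Fn1_F1.cs y) (Fn1_F1.cs v) = H v y"
  unfolding form_map_def using quot_form_coset Fn1_F1.quot_carr by auto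

lemma ab_hom_form_map_quot: "ab_hom Fn1_F1.Q (adjoint Fn1_F1.Q) (form_map Fn1_F1.Q quot_form)"
proof (rule ab_hom_adjointI)
  fix Y assume "Y \<in> ab_carr Fn1_F1.Q"
  then obtain y where y: "y \<in> Fn1" "Y = Fn1_F1.cs y" by (metis quot_Fn1_F1_elem)
  show "form_map Fn1_F1.Q quot_form Y \<in> ab_carr (dual Fn1_F1.Q)"
    unfolding dual_carr
  proof (intro conjI ballI allI impI)
    fix X X' assume "X \<in> ab_carr Fn1_F1.Q" "X' \<in> ab_carr Fn1_F1.Q"
    then obtain v v' where "v \<in> Fn1" "v' \<in> Fn1" "X = Fn1_F1.cs v" "X' = Fn1_F1.cs v'" by (metis quot_Fn1_F1_elem)
    thus "form_map Fn1_F1.Q quot_form Y (ab_add Fn1_F1.Q X X') = form_map Fn1_F1.Q quot_form Y X + form_map Fn1_F1.Q quot_form Y X'"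
      using y by (simp add: Fn1_F1.quot_add form_map_quot_coset H_add_left E_Fn1.F_sub)
  next
    fix s X assume "X \<in> ab_carr Fn1_F1.Q"
    then obtain v where "v \<in> Fn1" "X = Fn1_F1.cs v" by (metis quot_Fn1_F1_elem)
    thus "form_map Fn1_F1.Q quot_form Y (ab_smul Fn1_F1.Q s X) = s * form_map Fn1_F1.Q quot_form Y X"
      using y by (simp add: Fn1_F1.quot_smul form_map_quot_coset H_smul_left E_Fn1.F_sub)
  qed (simp add: form_map_def)
  fix X assume "X \<in> ab_carr Fn1_F1.Q"
  then obtain v where v: "v \<in> Fn1" "X = Fn1_F1.cs v" by (metis quot_Fn1_F1_elem)
  fix Y' assume "Y' \<in> ab_carr Fn1_F1.Q"
  then obtain y' where y': "y' \<in> Fn1" "Y' = Fn1_F1.cs y'" by (metis quot_Fn1_F1_elem)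
  show "form_map Fn1_F1.Q quot_form (ab_add Fn1_F1.Q Y Y') X = form_map Fn1_F1.Q quot_form Y X + form_map Fn1_F1.Q quot_form Y' X"
    using v y y' by (simp add: Fn1_F1.quot_add form_map_quot_coset H_add_right E_Fn1.F_sub)
  show "form_map Fn1_F1.Q quot_form (ab_smul Fn1_F1.Q s Y) X = fps_reflect s * form_map Fn1_F1.Q quot_form Y X" for s
    using v y by (simp add: Fn1_F1.quot_smul form_map_quot_coset H_smul_right E_Fn1.F_sub)
  have "H v (aa y) = H (aa v) y - fps_X^2 * fps_deriv (H v y)" using H_a_right v y E_Fn1.F_sub by simp
  thus "form_map Fn1_F1.Q quot_form (ab_a Fn1_F1.Q Y) X =
      form_map Fn1_F1.Q quot_form Y (ab_a Fn1_F1.Q X) - fps_X^2 * fps_deriv (form_map Fn1_F1.Q quot_form Y X)"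
    using v y by (simp add: Fn1_F1.quot_a form_map_quot_coset)
qed (simp add: form_map_def)

lemma inj_on_form_map_quot: "inj_on (form_map Fn1_F1.Q quot_form) (ab_carr Fn1_F1.Q)"
proof
  fix Y Y' assume "Y \<in> ab_carr Fn1_F1.Q" "Y' \<in> ab_carr Fn1_F1.Q" and eq: "form_map Fn1_F1.Q quot_form Y = form_map Fn1_F1.Q quot_form Y'"
  then obtain y y' where y: "y \<in> Fn1" "y' \<in> Fn1" "Y = Fn1_F1.cs y" "Y' = Fn1_F1.cs y'" by (metis quot_Fn1_F1_elem)
  have "pl y (sm (-1) y') \<in> F1"
  proof (rule mem_F1_if_perp)
    show "pl y (sm (-1) y') \<in> C" using y E_Fn1.F_sub by simp
    fix v assume v: "v \<in> Fn1"
    have "H v y = H v y'" using fun_cong[OF eq, of "Fn1_F1.cs v"] form_map_quot_coset v y by simp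
    thus "H v (pl y (sm (-1) y')) = 0" using v y E_Fn1.F_sub by (simp add: H_add_right H_smul_right)
  qed
  thus "Y = Y'" using Fn1_F1.coset_eq_iff[of y y'] y by simp
qed

text \<open>Surjectivity: a functional \<open>\<phi>\<close> on \<open>F\<^sub>n\<^sub>-\<^sub>1/F\<^sub>1\<close>, pulled back to \<open>E\<close> along the projection
  onto \<open>F\<^sub>n\<^sub>-\<^sub>1\<close>, is represented by some \<open>y\<close>; \<open>\<phi>\<close> kills the class of \<open>w\<close>, so \<open>y \<in> F\<^sub>n\<^sub>-\<^sub>1\<close>.\<close>

lemma form_map_quot_image: "form_map Fn1_F1.Q quot_form ` ab_carr Fn1_F1.Q = ab_carr (adjoint Fn1_F1.Q)"
proof
  show "form_map Fn1_F1.Q quot_form ` ab_carr Fn1_F1.Q \<subseteq> ab_carr (adjoint Fn1_F1.Q)"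
    using ab_hom_form_map_quot unfolding ab_hom_def by auto
next
  show "ab_carr (adjoint Fn1_F1.Q) \<subseteq> form_map Fn1_F1.Q quot_form ` ab_carr Fn1_F1.Q"
  proof
    fix \<phi> assume "\<phi> \<in> ab_carr (adjoint Fn1_F1.Q)"
    hence \<phi>add: "\<And>X X'. X \<in> ab_carr Fn1_F1.Q \<Longrightarrow> X' \<in> ab_carr Fn1_F1.Q \<Longrightarrow> \<phi> (ab_add Fn1_F1.Q X X') = \<phi> X + \<phi> X'"
      and \<phi>sm: "\<And>s X. X \<in> ab_carr Fn1_F1.Q \<Longrightarrow> \<phi> (ab_smul Fn1_F1.Q s X) = s * \<phi> X"
      and \<phi>out: "\<And>X. X \<notin> ab_carr Fn1_F1.Q \<Longrightarrow> \<phi> X = 0" unfolding adjoint_simps dual_carr by auto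
    have cs_mem: "Fn1_F1.cs v \<in> ab_carr Fn1_F1.Q" if "v \<in> Fn1" for v using that Fn1_F1.quot_carr by simp
    have "\<exists>y\<in>C. \<forall>u\<in>C. \<phi> (Fn1_F1.cs (proj u)) = H u y"
    proof (rule functional_represented)
      fix u u' assume u: "u \<in> C" "u' \<in> C"
      hence "Fn1_F1.cs (proj (pl u u')) = ab_add Fn1_F1.Q (Fn1_F1.cs (proj u)) (Fn1_F1.cs (proj u'))"
        using proj_mem_Fn1 by (simp add: proj_add Fn1_F1.quot_add)
      thus "\<phi> (Fn1_F1.cs (proj (pl u u'))) = \<phi> (Fn1_F1.cs (proj u)) + \<phi> (Fn1_F1.cs (proj u'))"
        using \<phi>add cs_mem proj_mem_Fn1 u by simp
    next
      fix s u assume u: "u \<in> C"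
      hence "Fn1_F1.cs (proj (sm s u)) = ab_smul Fn1_F1.Q s (Fn1_F1.cs (proj u))"
        using proj_mem_Fn1 by (simp add: proj_smul Fn1_F1.quot_smul)
      thus "\<phi> (Fn1_F1.cs (proj (sm s u))) = s * \<phi> (Fn1_F1.cs (proj u))"
        using \<phi>sm cs_mem proj_mem_Fn1 u by simp
    qed
    then obtain y where y: "y \<in> C" "\<And>u. u \<in> C \<Longrightarrow> \<phi> (Fn1_F1.cs (proj u)) = H u y" by blast
    have wFn1: "w \<in> Fn1" and "w \<in> F1" using w_mem H_w_w unfolding Fn1_def F1_iff by (auto intro: exI[of _ 1])
    hence "Fn1_F1.cs w = ab_smul Fn1_F1.Q 0 (Fn1_F1.cs z0)"
      using Fn1_F1.coset_eq_iff[of w z0] E_Fn1.F_zero Fn1_F1.quot_smul[of z0 0] by simp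
    hence "H w y = 0" using y(2)[OF w_mem] proj_id[OF wFn1] \<phi>sm cs_mem[OF E_Fn1.F_zero] by simp
    hence yFn1: "y \<in> Fn1" unfolding Fn1_def using y(1) H_sym[OF w_mem y(1)] by simp
    have "form_map Fn1_F1.Q quot_form (Fn1_F1.cs y) X = \<phi> X" for X
    proof (cases "X \<in> ab_carr Fn1_F1.Q")
      case True
      then obtain v where "v \<in> Fn1" "X = Fn1_F1.cs v" by (metis quot_Fn1_F1_elem)
      thus ?thesis using form_map_quot_coset yFn1 y(2)[of v] proj_id E_Fn1.F_sub by simp
    qed (simp add: form_map_def \<phi>out)
    hence "form_map Fn1_F1.Q quot_form (Fn1_F1.cs y) = \<phi>" ..
    thus "\<phi> \<in> form_map Fn1_F1.Q quot_form ` ab_carr Fn1_F1.Q" using cs_mem[OF yFn1] by blast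
  qed
qed

lemma hermitian_quot_Fn1_F1: "hermitian (quot (restr E Fn1) F1)"
  unfolding hermitian_def herm_nondeg_iff_form_map ab_iso_map_def bij_betw_def
  using herm_form_quot_form ab_hom_form_map_quot inj_on_form_map_quot form_map_quot_image by blast

end

theorem mainTheorem3:
  fixes E :: "'v abmod" and n :: nat and lam f g :: complex and F G :: "'v set"
  assumes "is_abmod E" and "has_rank E n" and "regular E" and "hermitian E"
    and "normal_sub E F" and "normal_sub E G" and "F \<noteq> G"
    and "ab_isomorphic (restr E F) (E_elem f)"
    and "ab_isomorphic (restr E G) (E_elem g)"
    and "f - lam \<in> \<int>" and "g - lam \<in> \<int>"
  shows "\<exists>F1 Fn1. normal_sub E F1 \<and> normal_sub E Fn1 \<and> F1 \<subseteq> Fn1 \<and>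
           has_rank (restr E F1) 1 \<and> has_rank (restr E Fn1) (n - 1) \<and>
           ab_isomorphic (adjoint (quot E Fn1)) (restr E F1) \<and>
           hermitian (quot (restr E Fn1) F1)"
proof -
  obtain H where "herm_form E H" "herm_nondeg E H" using assms(4) unfolding hermitian_def by blast
  then interpret herm_mod E H using assms(1) by unfold_locales (auto simp: is_abmod_def)
  have subF: "is_sub E F" and subG: "is_sub E G" using assms(5,6) unfolding normal_sub_def by auto
  obtain x where x: "x \<in> F" "F = {sm s x | s. True}" "aa x = sm (fps_const f * fps_X) x" "x \<noteq> z0"
    using elementary_sub_generator[OF subF assms(8)] by blast
  obtain y where y: "y \<in> G" "G = {sm s y | s. True}" "aa y = sm (fps_const g * fps_X) y" "y \<noteq> z0"
    using elementary_sub_generator[OF subG assms(9)] by blast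
  have "x \<in> C" "y \<in> C" using x(1) y(1) subF subG unfolding is_sub_def by auto
  then obtain z \<mu> where z: "z \<in> C" "z \<noteq> z0" "H z z = 0" "aa z = sm (fps_const \<mu> * fps_X) z"
    using exists_isotropic_eigenvector[of x F f y G g] x y assms(5-7) by blast
  obtain w y0 c where "w \<in> C" "y0 \<in> C" "H w w = 0" "H w y0 = 1" "aa w = sm c w"
    using exists_isotropic_unimodular[OF z] by blast
  then interpret isotropic_flag E H w y0 c by unfold_locales
  show ?thesis
    using normal_F1[OF assms(2)] normal_Fn1 F1_subset_Fn1 rank_F1 rank_Fn1[OF assms(2)]
      adjoint_quot_Fn1_iso hermitian_quot_Fn1_F1 by blast
qed

end
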